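(* Let $m\geq1$ be an integer and let $\{c_n\}_{n=0}^\infty$ be a real sequence such that $F(r)=\sum_{n=0}^\infty c_nr^n$ converges for $|r|<1$, and suppose that $nc_n=O_{\mathrm{L}}(1)$ $(\mathrm{C},m)$, i.e. there is $K>0$ with $$\frac{m!}{n^m}\sum_{k=0}^{n}\binom{k+m-1}{m-1}(n-k)c_{n-k}>-K\quad\text{for all }n\geq1.$$ Let $a,b$ be constants. Then $$F(r)=a+b\log\left(\frac{1}{1-r}\right)+o(1),\qquad r\to1^-,$$ if and only if $$\lim_{N\to\infty}\left(\sum_{n=0}^Nc_n-b\log N\right)=a+b\gamma\quad(\mathrm{C},m),$$ where $\gamma$ is Euler's constant.
   Context: For a sequence $\{u_k\}_{k\geq0}$, $C_m\{u_k;n\}=\frac{m!}{n^m}\sum_{k=0}^{n}\binom{k+m-1}{m-1}u_{n-k}$ ($n\geq1$) are its Cesàro means of order $m$, and $\lim_{N\to\infty}u_N=\ell$ $(\mathrm{C},m)$ means $\lim_{n\to\infty}C_m\{u_k;n\}=\ell$. Here $u_N=\sum_{n=0}^Nc_n-b\log N$ for $N\geq1$ (the value of $u_0$ is irrelevant, e.g. $u_0=c_0$). *)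

theory Defs
  imports "HOL-Analysis.Analysis"
begin

definition cesaro_mean :: "nat \<Rightarrow> (nat \<Rightarrow> real) \<Rightarrow> nat \<Rightarrow> real" where
  "cesaro_mean m u n = fact m / real n ^ m *
     (\<Sum>k = 0..n. real ((k + m - 1) choose (m - 1)) * u (n - k))"

definition cesaro_lim :: "nat \<Rightarrow> (nat \<Rightarrow> real) \<Rightarrow> real \<Rightarrow> bool" where
  "cesaro_lim m u l \<longleftrightarrow> (\<lambda>n. cesaro_mean m u n) \<longlonglongrightarrow> l"

end

theory Submission
  imports Defs
begin

text \<open>Write \<open>m = p + 1\<close> and \<open>e\<^sub>n = c\<^sub>n - b/n\<close>. The terms \<open>b/n\<close> account exactly for
  \<open>b log (1/(1 - r))\<close> in the Abel mean and, since \<open>H\<^sub>N - log N \<longrightarrow> \<gamma>\<close>, for \<open>b log N + b \<gamma>\<close> in the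
  Cesaro means, so it suffices to show that \<open>\<Sum> e\<^sub>n\<close> is Abel summable to \<open>a\<close> iff it is
  \<open>(C, p + 1)\<close> summable to \<open>a\<close>. Let \<open>\<sigma>\<^sub>n\<close> be the \<open>(C, p + 1)\<close> mean of the partial sums,
  normalised so that its weights sum to \<open>1\<close>. The power series with coefficients \<open>(n+p+1 choose p+1) \<sigma>\<^sub>n\<close>
  is \<open>F(r)/(1 - r)\<^sup>p\<^sup>+\<^sup>2\<close>; integrating it \<open>p + 1\<close> times termwise (with l'Hopital's rule at \<open>r = 1\<close>)
  shows that \<open>(1 - r) \<Sum> \<sigma>\<^sub>n r\<^sup>n \<longrightarrow> a\<close> whenever \<open>F(r) \<longrightarrow> a\<close>. Hence \<open>d\<^sub>n = \<sigma>\<^sub>n - \<sigma>\<^sub>n\<^sub>-\<^sub>1\<close> is Abel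
  summable to \<open>a\<close>, and \<open>n d\<^sub>n\<close> is the normalised mean of \<open>k e\<^sub>k\<close>, which the hypothesis bounds below.
  The Hardy--Littlewood Tauberian theorem, proved by Karamata's polynomial approximation,
  then gives \<open>\<sigma>\<^sub>n \<longrightarrow> a\<close>. Conversely, \<open>\<sigma>\<^sub>n \<longrightarrow> a\<close> implies \<open>F(r) \<longrightarrow> a\<close> by a Toeplitz argument with
  the weights \<open>(1 - r)\<^sup>p\<^sup>+\<^sup>2 (n+p+1 choose p+1) r\<^sup>n\<close>, which sum to \<open>1\<close>.\<close>

section \<open>The Hardy--Littlewood Tauberian theorem\<close>

lemma power_power_eq_power_Suc_power:
  fixes x :: "'a::comm_monoid_mult"
  shows "x ^ n * (x ^ n) ^ k = (x ^ Suc k) ^ n"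
  by (metis power_Suc power_mult mult.commute)

lemma monomial_sum_has_integral:
  "((\<lambda>t. \<Sum>i\<le>N. b i * t ^ i) has_integral (\<Sum>i\<le>N. b i / real (Suc i))) {0..1::real}"
proof -
  have "((\<lambda>t. b i * t ^ i) has_integral (b i / real (Suc i))) {0..1::real}" for i
  proof -
    have "((\<lambda>t. b i * t ^ i) has_integral
           ((\<lambda>t. b i * t ^ Suc i / Suc i) 1 - (\<lambda>t. b i * t ^ Suc i / Suc i) 0)) {0..1::real}"
      by (rule fundamental_theorem_of_calculus)
        (simp, unfold has_real_derivative_iff_has_vector_derivative[symmetric],
          (rule derivative_eq_intros refl | simp)+)
    then show ?thesis by simp
  qed
  then show ?thesis by (intro has_integral_sum) auto
qed

lemma sums_monomial_substitution:
  fixes f b :: "nat \<Rightarrow> real"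
  assumes "\<And>i. i \<le> N \<Longrightarrow> summable (\<lambda>n. f n * (x ^ Suc i) ^ n)"
  shows "(\<lambda>n. f n * (x ^ n * (\<Sum>i\<le>N. b i * (x ^ n) ^ i)))
           sums (\<Sum>i\<le>N. b i * (\<Sum>n. f n * (x ^ Suc i) ^ n))"
proof -
  have "(\<lambda>n. \<Sum>i\<le>N. b i * (f n * (x ^ Suc i) ^ n)) sums (\<Sum>i\<le>N. b i * (\<Sum>n. f n * (x ^ Suc i) ^ n))"
    using assms by (intro sums_sum sums_mult summable_sums) simp
  moreover have "(\<Sum>i\<le>N. b i * (f n * (x ^ Suc i) ^ n)) = f n * (x ^ n * (\<Sum>i\<le>N. b i * (x ^ n) ^ i))" for n
    unfolding sum_distrib_left
    by (intro sum.cong refl) (simp add: power_power_eq_power_Suc_power[symmetric] mult_ac del: power_Suc)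
  ultimately show ?thesis by simp
qed

lemma abel_mean_geometric_power:
  "((\<lambda>x::real. (1 - x) * (\<Sum>n. (x ^ Suc k) ^ n)) \<longlongrightarrow> 1 / real (Suc k)) (at_left 1)"
proof -
  have "((\<lambda>x::real. 1 / (\<Sum>i<Suc k. x ^ i)) \<longlongrightarrow> 1 / (\<Sum>i<Suc k. 1 ^ i)) (at_left 1)"
    by (intro tendsto_intros) auto
  moreover have "\<forall>\<^sub>F x in at_left (1::real). 1 / (\<Sum>i<Suc k. x ^ i) = (1 - x) * (\<Sum>n. (x ^ Suc k) ^ n)"
    using eventually_at_left_real[of 0 "1::real", OF zero_less_one]
  proof eventually_elim
    case (elim x)
    then have "x ^ Suc k < 1" by (intro power_Suc_less_one) auto
    then have "(\<Sum>n. (x ^ Suc k) ^ n) = 1 / (1 - x ^ Suc k)"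
      using elim by (simp add: suminf_geometric del: power_Suc)
    also have "1 - x ^ Suc k = (1 - x) * (\<Sum>i<Suc k. x ^ i)"
      by (rule one_diff_power_eq)
    finally show ?case using elim by (simp del: power_Suc sum.lessThan_Suc)
  qed
  ultimately show ?thesis by (simp add: Lim_transform_eventually)
qed

lemma summable_powser_at_power:
  assumes "\<And>y::real. \<bar>y\<bar> < 1 \<Longrightarrow> summable (\<lambda>n. f n * y ^ n)" "0 \<le> x" "x < 1"
  shows "summable (\<lambda>n. f n * (x ^ Suc i) ^ n)"
proof -
  have "x ^ Suc i < 1" using assms(2,3) power_Suc_less_one[of x i] by (cases "x = 0") auto
  then show ?thesis using assms by (intro assms(1)) auto
qed

lemma abel_mean_polynomial:
  assumes "real_polynomial_function q"
  shows "((\<lambda>x. (1 - x) * (\<Sum>n. x ^ n * q (x ^ n))) \<longlongrightarrow> integral {0..1} q) (at_left 1)"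
proof -
  obtain b N where q: "q = (\<lambda>t. \<Sum>i\<le>N. b i * t ^ i)"
    using assms real_polynomial_function_iff_sum by auto
  have geom: "\<And>y::real. \<bar>y\<bar> < 1 \<Longrightarrow> summable (\<lambda>n. 1 * y ^ n)"
    by (simp add: summable_geometric)
  have "((\<lambda>x. \<Sum>i\<le>N. b i * ((1 - x) * (\<Sum>n. (x ^ Suc i) ^ n))) \<longlongrightarrow> (\<Sum>i\<le>N. b i * (1 / real (Suc i))))
          (at_left (1::real))"
    by (intro tendsto_sum tendsto_mult tendsto_const abel_mean_geometric_power)
  moreover have "\<forall>\<^sub>F x in at_left 1. (\<Sum>i\<le>N. b i * ((1 - x) * (\<Sum>n. (x ^ Suc i) ^ n)))
                                      = (1 - x) * (\<Sum>n. x ^ n * q (x ^ n))"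
    using eventually_at_left_real[of 0 "1::real", OF zero_less_one]
  proof eventually_elim
    case (elim x)
    have "(\<lambda>n. 1 * (x ^ n * q (x ^ n))) sums (\<Sum>i\<le>N. b i * (\<Sum>n. 1 * (x ^ Suc i) ^ n))"
      unfolding q using elim by (intro sums_monomial_substitution summable_powser_at_power[OF geom]) auto
    then show ?case by (simp add: sums_iff sum_distrib_left mult_ac)
  qed
  moreover have "integral {0..1} q = (\<Sum>i\<le>N. b i / real (Suc i))"
    unfolding q using monomial_sum_has_integral by (rule integral_unique)
  ultimately show ?thesis by (simp add: Lim_transform_eventually)
qed

lemma
  fixes a :: "nat \<Rightarrow> real"
  assumes conv: "\<And>y::real. \<bar>y\<bar> < 1 \<Longrightarrow> summable (\<lambda>n. a n * y ^ n)"
    and q: "real_polynomial_function q"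
  shows summable_powser_polynomial:
      "\<And>x. 0 \<le> x \<Longrightarrow> x < 1 \<Longrightarrow> summable (\<lambda>n. a n * (x ^ n * q (x ^ n)))"
    and powser_polynomial_tendsto_zero:
      "((\<lambda>x. \<Sum>n. a n * x ^ n) \<longlongrightarrow> 0) (at_left 1) \<Longrightarrow>
       ((\<lambda>x. \<Sum>n. a n * (x ^ n * q (x ^ n))) \<longlongrightarrow> 0) (at_left 1)"
proof -
  obtain b N where q: "q = (\<lambda>t. \<Sum>i\<le>N. b i * t ^ i)"
    using q real_polynomial_function_iff_sum by auto
  have sums: "(\<lambda>n. a n * (x ^ n * q (x ^ n))) sums (\<Sum>i\<le>N. b i * (\<Sum>n. a n * (x ^ Suc i) ^ n))"
    if "0 \<le> x" "x < 1" for x :: real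
    unfolding q using that by (intro sums_monomial_substitution summable_powser_at_power[OF conv])
  then show "\<And>x. 0 \<le> x \<Longrightarrow> x < 1 \<Longrightarrow> summable (\<lambda>n. a n * (x ^ n * q (x ^ n)))"
    by (rule sums_summable)
  assume lim: "((\<lambda>x. \<Sum>n. a n * x ^ n) \<longlongrightarrow> 0) (at_left 1)"
  have "((\<lambda>x. \<Sum>n. a n * (x ^ Suc i) ^ n) \<longlongrightarrow> 0) (at_left (1::real))" for i
  proof (rule filterlim_compose[OF lim, unfolded o_def])
    show "filterlim (\<lambda>x::real. x ^ Suc i) (at_left 1) (at_left 1)"
    proof (rule tendsto_imp_filterlim_at_left)
      show "((\<lambda>x::real. x ^ Suc i) \<longlongrightarrow> 1) (at_left 1)"
        by (auto intro!: tendsto_eq_intros)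
      show "\<forall>\<^sub>F x in at_left 1. x ^ Suc i < (1::real)"
        using eventually_at_left_real[of 0 "1::real", OF zero_less_one]
        by eventually_elim (simp add: power_Suc_less_one del: power_Suc)
    qed
  qed
  then have "((\<lambda>x. \<Sum>i\<le>N. b i * (\<Sum>n. a n * (x ^ Suc i) ^ n)) \<longlongrightarrow> (\<Sum>i\<le>N. b i * 0)) (at_left (1::real))"
    by (intro tendsto_sum tendsto_mult tendsto_const)
  moreover have "\<forall>\<^sub>F x in at_left 1. (\<Sum>i\<le>N. b i * (\<Sum>n. a n * (x ^ Suc i) ^ n))
                                      = (\<Sum>n. a n * (x ^ n * q (x ^ n)))"
    using eventually_at_left_real[of 0 "1::real", OF zero_less_one]
    by eventually_elim (use sums in \<open>simp add: sums_iff del: power_Suc\<close>)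
  ultimately show "((\<lambda>x. \<Sum>n. a n * (x ^ n * q (x ^ n))) \<longlongrightarrow> 0) (at_left 1)"
    by (simp add: Lim_transform_eventually)
qed

lemma polynomial_sandwich_integral:
  fixes G \<phi>1 \<phi>2 :: "real \<Rightarrow> real"
  assumes cont: "continuous_on {0..1} \<phi>1" "continuous_on {0..1} \<phi>2"
    and between: "\<And>t. t \<in> {0..1} \<Longrightarrow> \<phi>1 t \<le> G t \<and> G t \<le> \<phi>2 t"
    and small: "integral {0..1} (\<lambda>t. \<phi>2 t - \<phi>1 t) < \<epsilon>"
  obtains p1 p2 where "real_polynomial_function p1" "real_polynomial_function p2"
    "\<And>t. t \<in> {0..1} \<Longrightarrow> p1 t \<le> G t \<and> G t \<le> p2 t"
    "integral {0..1} (\<lambda>t. p2 t - p1 t) < \<epsilon>"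
proof -
  define \<eta> where "\<eta> = (\<epsilon> - integral {0..1} (\<lambda>t. \<phi>2 t - \<phi>1 t)) / 8"
  have \<eta>: "\<eta> > 0" using small by (simp add: \<eta>_def)
  obtain g1 where g1: "real_polynomial_function g1" "\<And>t. t \<in> {0..1} \<Longrightarrow> \<bar>\<phi>1 t - g1 t\<bar> < \<eta>"
    using Stone_Weierstrass_real_polynomial_function[OF compact_Icc cont(1) \<eta>] by blast
  obtain g2 where g2: "real_polynomial_function g2" "\<And>t. t \<in> {0..1} \<Longrightarrow> \<bar>\<phi>2 t - g2 t\<bar> < \<eta>"
    using Stone_Weierstrass_real_polynomial_function[OF compact_Icc cont(2) \<eta>] by blast
  define p1 where "p1 t = g1 t - \<eta>" for t
  define p2 where "p2 t = g2 t + \<eta>" for t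
  have rpf: "real_polynomial_function p1" "real_polynomial_function p2"
    unfolding p1_def p2_def using g1(1) g2(1)
    by (auto intro: real_polynomial_function_diff real_polynomial_function.intros)
  have "integral {0..1} (\<lambda>t. p2 t - p1 t) \<le> integral {0..1} (\<lambda>t. \<phi>2 t - \<phi>1 t + 4 * \<eta>)"
  proof (rule integral_le)
    show "(\<lambda>t. p2 t - p1 t) integrable_on {0..1}"
      using rpf by (intro integrable_continuous_interval continuous_on_diff continuous_on_polymonial_function)
        (auto simp: real_polynomial_function_eq)
    show "(\<lambda>t. \<phi>2 t - \<phi>1 t + 4 * \<eta>) integrable_on {0..1}"
      using cont by (intro integrable_continuous_interval continuous_intros)
    show "p2 t - p1 t \<le> \<phi>2 t - \<phi>1 t + 4 * \<eta>" if "t \<in> {0..1}" for t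
      using g1(2)[OF that] g2(2)[OF that] by (simp add: p1_def p2_def abs_less_iff)
  qed
  also have "\<dots> = integral {0..1} (\<lambda>t. \<phi>2 t - \<phi>1 t) + 4 * \<eta>"
    using cont by (subst integral_add) (auto intro: integrable_continuous_interval continuous_intros)
  also have "\<dots> < \<epsilon>" using small by (simp add: \<eta>_def field_simps)
  finally show ?thesis
    using that[OF rpf] g1(2) g2(2) between by (force simp: p1_def p2_def abs_less_iff)
qed

lemma jump_continuous_sandwich:
  fixes L R :: "real \<Rightarrow> real"
  assumes cont: "continuous_on {0..1} L" "continuous_on {0..1} R" and \<delta>: "\<delta> > 0"
    and LR: "\<And>t. t \<in> {c - \<delta>..c + \<delta>} \<Longrightarrow> L t \<le> R t"
  obtains \<phi>1 \<phi>2 where "continuous_on {0..1} \<phi>1" "continuous_on {0..1} \<phi>2"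
    "\<And>t. \<phi>1 t \<le> (if t < c then L t else R t)" "\<And>t. (if t < c then L t else R t) \<le> \<phi>2 t"
    "\<And>t. \<phi>2 t - \<phi>1 t \<le> (if t \<in> {c - \<delta>..c + \<delta>} then R t - L t else 0)"
proof -
  define ramp where "ramp a t = max 0 (min 1 ((t - a) / \<delta>))" for a t :: real
  have ramp_01: "0 \<le> ramp a t" "ramp a t \<le> 1" for a t by (auto simp: ramp_def)
  have ramp_0: "ramp a t = 0" if "t \<le> a" for a t using that \<delta> by (simp add: ramp_def divide_nonpos_pos)
  have ramp_1: "ramp a t = 1" if "a + \<delta> \<le> t" for a t using that \<delta> by (simp add: ramp_def field_simps)
  have ramp_mono: "ramp c t \<le> ramp (c - \<delta>) t" for t
    using divide_right_mono[of "t - c" "t - (c - \<delta>)" \<delta>] \<delta> by (auto simp: ramp_def)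
  define \<phi>1 where "\<phi>1 t = L t + ramp c t * (R t - L t)" for t
  define \<phi>2 where "\<phi>2 t = L t + ramp (c - \<delta>) t * (R t - L t)" for t
  show ?thesis
  proof (rule that[of \<phi>1 \<phi>2])
    show "continuous_on {0..1} \<phi>1" "continuous_on {0..1} \<phi>2"
      unfolding \<phi>1_def \<phi>2_def ramp_def using cont \<delta> by (auto intro!: continuous_intros)
    fix t
    show "\<phi>1 t \<le> (if t < c then L t else R t)"
    proof (cases "c \<le> t \<and> t \<le> c + \<delta>")
      case True
      then have "ramp c t * (R t - L t) \<le> R t - L t"
        using LR[of t] ramp_01[of c t] \<delta> by (intro mult_left_le_one_le) auto
      then show ?thesis using True by (simp add: \<phi>1_def)
    qed (use ramp_0[of t c] ramp_1[of c t] in \<open>auto simp: \<phi>1_def\<close>)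
    show "(if t < c then L t else R t) \<le> \<phi>2 t"
    proof (cases "c - \<delta> \<le> t \<and> t < c")
      case True
      then show ?thesis using LR[of t] ramp_01[of "c - \<delta>" t] by (simp add: \<phi>2_def)
    qed (use ramp_0[of t "c - \<delta>"] ramp_1[of "c - \<delta>" t] in \<open>auto simp: \<phi>2_def\<close>)
    have "\<phi>2 t - \<phi>1 t = (ramp (c - \<delta>) t - ramp c t) * (R t - L t)"
      by (simp add: \<phi>1_def \<phi>2_def algebra_simps)
    then show "\<phi>2 t - \<phi>1 t \<le> (if t \<in> {c - \<delta>..c + \<delta>} then R t - L t else 0)"
      using ramp_0[of t "c - \<delta>"] ramp_0[of t c] ramp_1[of "c - \<delta>" t] ramp_1[of c t]
        ramp_01[of c t] ramp_01[of "c - \<delta>" t] ramp_mono[of t] LR[of t]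
      by (auto simp: mult_left_le_one_le)
  qed
qed

lemma integral_le_interval_bound:
  fixes f :: "real \<Rightarrow> real"
  assumes "continuous_on {0..1} f" "0 \<le> a" "a \<le> b" "b \<le> 1"
    and "\<And>t. f t \<le> (if t \<in> {a..b} then J else 0)"
  shows "integral {0..1} f \<le> (b - a) * J"
proof (rule has_integral_le[rotated])
  show "((\<lambda>t. if t \<in> {a..b} then J else 0) has_integral ((b - a) * J)) {0..1}"
    using has_integral_const_real[of J a b] assms(2-4) by (subst has_integral_restrict) auto
  show "(f has_integral integral {0..1} f) {0..1}"
    using assms(1) by (intro integrable_integral integrable_continuous_interval)
qed (use assms(5) in simp)

lemma jump_polynomial_sandwich:
  fixes c \<epsilon> :: real
  assumes c: "0 < c" "c < 1" and \<epsilon>: "\<epsilon> > 0"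
  obtains p1 p2 where "real_polynomial_function p1" "real_polynomial_function p2"
    "\<And>t. t \<in> {0..1} \<Longrightarrow> p1 t \<le> (if t < c then - 1 / (1 - t) else 1 / t)
                          \<and> (if t < c then - 1 / (1 - t) else 1 / t) \<le> p2 t"
    "integral {0..1} (\<lambda>t. p2 t - p1 t) < \<epsilon>"
proof -
  define J where "J = 2 / c + 2 / (1 - c)"
  have J: "J > 0" using c by (simp add: J_def add_pos_pos)
  define \<delta> where "\<delta> = min (min (c / 2) ((1 - c) / 2)) (\<epsilon> / (4 * J))"
  have "\<delta> \<le> c / 2" "\<delta> \<le> (1 - c) / 2" "\<delta> \<le> \<epsilon> / (4 * J)"
    unfolding \<delta>_def by (meson min.cobounded1 min.cobounded2 order.trans)+
  then have \<delta>: "0 < \<delta>" "\<delta> \<le> c / 2" "\<delta> \<le> (1 - c) / 2" "2 * \<delta> * J < \<epsilon>"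
    using c \<epsilon> J mult_right_mono[of \<delta> "\<epsilon> / (4 * J)" J] by (auto simp: \<delta>_def)
  \<comment> \<open>the two branches, extended continuously to all of \<open>[0, 1]\<close>\<close>
  define L where "L t = - 1 / (1 - min t (c + \<delta>))" for t
  define R where "R t = 1 / max t (c - \<delta>)" for t
  have cont: "continuous_on {0..1} L" "continuous_on {0..1} R"
    unfolding L_def R_def using c \<delta> by (auto intro!: continuous_intros)
  have LR: "L t \<le> R t \<and> R t - L t \<le> J" if "t \<in> {c - \<delta>..c + \<delta>}" for t
  proof -
    have t: "(1 - c) / 2 \<le> 1 - t" "c / 2 \<le> t" using that \<delta> by auto
    then have "1 / (1 - t) \<le> 1 / ((1 - c) / 2)" "1 / t \<le> 1 / (c / 2)"
      using c by (intro divide_left_mono; simp)+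
    then have "1 / (1 - t) \<le> 2 / (1 - c)" "1 / t \<le> 2 / c" by simp_all
    moreover have "0 \<le> 1 / (1 - t)" "0 \<le> 1 / t" using c t by auto
    moreover have "L t = - (1 / (1 - t))" "R t = 1 / t" using that by (auto simp: L_def R_def)
    ultimately show ?thesis unfolding J_def by (intro conjI; linarith)
  qed
  obtain \<phi>1 \<phi>2 where \<phi>: "continuous_on {0..1} \<phi>1" "continuous_on {0..1} \<phi>2"
    "\<And>t. \<phi>1 t \<le> (if t < c then L t else R t)" "\<And>t. (if t < c then L t else R t) \<le> \<phi>2 t"
    "\<And>t. \<phi>2 t - \<phi>1 t \<le> (if t \<in> {c - \<delta>..c + \<delta>} then R t - L t else 0)"
    using jump_continuous_sandwich[OF cont \<delta>(1), of c] LR by blast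
  have "\<phi>2 t - \<phi>1 t \<le> (if t \<in> {c - \<delta>..c + \<delta>} then J else 0)" for t
    using \<phi>(5)[of t] LR[of t] by auto
  then have "integral {0..1} (\<lambda>t. \<phi>2 t - \<phi>1 t) \<le> (c + \<delta> - (c - \<delta>)) * J"
    using \<phi>(1,2) \<delta> c by (intro integral_le_interval_bound continuous_intros) auto
  then have small: "integral {0..1} (\<lambda>t. \<phi>2 t - \<phi>1 t) < \<epsilon>" using \<delta>(4) by simp
  have "(if t < c then L t else R t) = (if t < c then - 1 / (1 - t) else 1 / t)" if "t \<le> 1" for t
    using that \<delta> by (auto simp: L_def R_def)
  then have between: "\<phi>1 t \<le> (if t < c then - 1 / (1 - t) else 1 / t)
                      \<and> (if t < c then - 1 / (1 - t) else 1 / t) \<le> \<phi>2 t" if "t \<in> {0..1}" for t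
    using \<phi>(3,4)[of t] that by auto
  show ?thesis by (rule polynomial_sandwich_integral[OF \<phi>(1,2) between small]) (assumption | rule that)+
qed

lemma one_sided_product_bounds:
  fixes \<alpha> K D l u v :: real
  assumes "- K \<le> real n * \<alpha>" "0 \<le> K" "0 \<le> D" "l \<le> v" "v \<le> u" "u - l \<le> real n * D"
  shows "\<alpha> * v \<le> \<alpha> * u + K * D" "\<alpha> * l - K * D \<le> \<alpha> * v"
proof -
  have "real n * (- K * D) \<le> real n * (\<alpha> * (u - v)) \<and> real n * (- K * D) \<le> real n * (\<alpha> * (v - l))"
  proof -
    have "- K * (u - v) \<le> real n * \<alpha> * (u - v)" "- K * (v - l) \<le> real n * \<alpha> * (v - l)"
      by (rule mult_right_mono; use assms in simp)+
    moreover have "K * (u - v) \<le> K * (real n * D)" "K * (v - l) \<le> K * (real n * D)"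
      using assms by (auto intro: mult_left_mono)
    ultimately show ?thesis by (simp add: algebra_simps)
  qed
  then have "n > 0 \<Longrightarrow> - K * D \<le> \<alpha> * (u - v) \<and> - K * D \<le> \<alpha> * (v - l)"
    by (metis mult_le_cancel_left_pos of_nat_0_less_iff)
  moreover have "n = 0 \<Longrightarrow> u = v \<and> v = l" using assms by simp
  ultimately show "\<alpha> * v \<le> \<alpha> * u + K * D" "\<alpha> * l - K * D \<le> \<alpha> * v"
    using assms(2,3) by (cases "n = 0", auto simp: algebra_simps)+
qed

text \<open>Karamata's argument under the one-sided Tauberian condition: \<open>g\<close> is squeezed between
  polynomials \<open>t q\<^sub>1(t)\<close> and \<open>t q\<^sub>2(t)\<close> whose gap carries the factor \<open>1 - t\<close>; Bernoulli's
  inequality \<open>1 - x\<^sup>n \<le> n (1 - x)\<close> then lets \<open>n a\<^sub>n \<ge> -K\<close> absorb the gap.\<close>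
lemma karamata_sum_bounds:
  fixes g q1 q2 w :: "real \<Rightarrow> real" and a :: "nat \<Rightarrow> real"
  assumes conv: "\<And>y::real. \<bar>y\<bar> < 1 \<Longrightarrow> summable (\<lambda>n. a n * y ^ n)"
    and tauber: "\<And>n. n \<ge> 1 \<Longrightarrow> - K \<le> real n * a n" and K: "0 \<le> K"
    and x: "0 < x" "x < 1" and g_summable: "summable (\<lambda>n. a n * g (x ^ n))"
    and poly: "real_polynomial_function q1" "real_polynomial_function q2" "real_polynomial_function w"
    and sandwich: "\<And>t. t \<in> {0..1} \<Longrightarrow> t * q1 t \<le> g t \<and> g t \<le> t * q2 t
                       \<and> t * q2 t - t * q1 t \<le> t * (1 - t) * w t \<and> 0 \<le> w t"
  defines "D \<equiv> (1 - x) * (\<Sum>n. x ^ n * w (x ^ n))"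
  shows "(\<Sum>n. a n * (x ^ n * q1 (x ^ n))) - K * D \<le> (\<Sum>n. a n * g (x ^ n))"
    and "(\<Sum>n. a n * g (x ^ n)) \<le> (\<Sum>n. a n * (x ^ n * q2 (x ^ n))) + K * D"
proof -
  define d where "d n = (1 - x) * (x ^ n * w (x ^ n))" for n
  have "summable (\<lambda>n. 1 * (x ^ n * w (x ^ n)))"
    using x by (intro summable_powser_polynomial poly(3)) (auto simp: summable_geometric)
  then have d: "d sums D" unfolding d_def D_def by (intro sums_mult summable_sums) simp
  have s1: "summable (\<lambda>n. a n * (x ^ n * q1 (x ^ n)))" and s2: "summable (\<lambda>n. a n * (x ^ n * q2 (x ^ n)))"
    using x by (auto intro: summable_powser_polynomial conv poly)
  have bounds: "a n * g (x ^ n) \<le> a n * (x ^ n * q2 (x ^ n)) + K * d n \<and>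
                a n * (x ^ n * q1 (x ^ n)) - K * d n \<le> a n * g (x ^ n)" for n
  proof -
    define y where "y = x ^ n"
    have y: "y \<in> {0..1}" using x by (auto simp: y_def power_le_one)
    have "1 - y \<le> real n * (1 - x)"
      using Bernoulli_inequality[of "x - 1" n] x by (simp add: y_def algebra_simps)
    then have "(1 - y) * (y * w y) \<le> real n * (1 - x) * (y * w y)"
      using sandwich[OF y] y by (intro mult_right_mono) auto
    then have "y * (1 - y) * w y \<le> real n * d n" by (simp add: d_def y_def[symmetric] ac_simps)
    moreover have "- K \<le> real n * a n" using tauber[of n] K by (cases "n = 0") auto
    moreover have "0 \<le> d n" using sandwich[OF y] x y by (simp add: d_def y_def[symmetric])
    ultimately show ?thesis
      using one_sided_product_bounds[of K n "a n" "d n" "y * q1 y" "g y" "y * q2 y"] sandwich[OF y] K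
      by (simp add: y_def[symmetric])
  qed
  show "(\<Sum>n. a n * (x ^ n * q1 (x ^ n))) - K * D \<le> (\<Sum>n. a n * g (x ^ n))"
    using sums_diff[OF summable_sums[OF s1] sums_mult[OF d, of K]] bounds
    by (intro sums_le[OF _ _ summable_sums[OF g_summable]]) auto
  show "(\<Sum>n. a n * g (x ^ n)) \<le> (\<Sum>n. a n * (x ^ n * q2 (x ^ n))) + K * D"
    using sums_add[OF summable_sums[OF s2] sums_mult[OF d, of K]] bounds
    by (intro sums_le[OF _ summable_sums[OF g_summable]]) auto
qed

lemma karamata_tendsto_zero:
  fixes a :: "nat \<Rightarrow> real" and g :: "real \<Rightarrow> real"
  assumes conv: "\<And>y::real. \<bar>y\<bar> < 1 \<Longrightarrow> summable (\<lambda>n. a n * y ^ n)"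
    and lim: "((\<lambda>x. \<Sum>n. a n * x ^ n) \<longlongrightarrow> 0) (at_left 1)"
    and tauber: "\<And>n. n \<ge> 1 \<Longrightarrow> - K \<le> real n * a n" and K: "0 \<le> K"
    and g_summable: "\<And>x. 0 < x \<Longrightarrow> x < 1 \<Longrightarrow> summable (\<lambda>n. a n * g (x ^ n))"
    and approx: "\<And>\<epsilon>. \<epsilon> > 0 \<Longrightarrow> \<exists>q1 q2 w. real_polynomial_function q1 \<and> real_polynomial_function q2
                   \<and> real_polynomial_function w \<and> integral {0..1} w < \<epsilon>
                   \<and> (\<forall>t\<in>{0..1}. t * q1 t \<le> g t \<and> g t \<le> t * q2 t
                                  \<and> t * q2 t - t * q1 t \<le> t * (1 - t) * w t \<and> 0 \<le> w t)"
  shows "((\<lambda>x. \<Sum>n. a n * g (x ^ n)) \<longlongrightarrow> 0) (at_left 1)"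
proof (rule tendstoI)
  fix \<epsilon> :: real assume \<epsilon>: "\<epsilon> > 0"
  define \<epsilon>' where "\<epsilon>' = \<epsilon> / (2 * K + 2)"
  have \<epsilon>': "\<epsilon>' > 0" "K * \<epsilon>' \<le> \<epsilon> / 2" using \<epsilon> K by (auto simp: \<epsilon>'_def field_simps)
  obtain q1 q2 w where poly: "real_polynomial_function q1" "real_polynomial_function q2"
      "real_polynomial_function w" and small: "integral {0..1} w < \<epsilon>'"
    and sandwich: "\<And>t. t \<in> {0..1} \<Longrightarrow> t * q1 t \<le> g t \<and> g t \<le> t * q2 t
                       \<and> t * q2 t - t * q1 t \<le> t * (1 - t) * w t \<and> 0 \<le> w t"
    using approx[OF \<epsilon>'(1)] by blast
  have near_zero: "\<forall>\<^sub>F x in at_left 1. \<bar>\<Sum>n. a n * (x ^ n * q (x ^ n))\<bar> < \<epsilon> / 4"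
    if "real_polynomial_function q" for q
    using tendstoD[OF powser_polynomial_tendsto_zero[OF conv that lim], of "\<epsilon> / 4"] \<epsilon> by simp
  have gap: "\<forall>\<^sub>F x in at_left 1. (1 - x) * (\<Sum>n. x ^ n * w (x ^ n)) < \<epsilon>'"
    using order_tendstoD(2)[OF abel_mean_polynomial[OF poly(3)] small] .
  show "\<forall>\<^sub>F x in at_left 1. dist (\<Sum>n. a n * g (x ^ n)) 0 < \<epsilon>"
    using near_zero[OF poly(1)] near_zero[OF poly(2)] gap eventually_at_left_real[of 0 "1::real", OF zero_less_one]
  proof eventually_elim
    case (elim x)
    then have x: "0 < x" "x < 1" by auto
    have "K * ((1 - x) * (\<Sum>n. x ^ n * w (x ^ n))) \<le> K * \<epsilon>'"
      using elim(3) K by (intro mult_left_mono) auto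
    with karamata_sum_bounds[OF conv tauber K x g_summable[OF x] poly sandwich] elim(1,2) \<epsilon>'(2)
    show ?case unfolding dist_real_def abs_less_iff diff_zero by (intro conjI; linarith)
  qed
qed

lemma indicator_polynomial_sandwich:
  fixes c \<epsilon> :: real
  assumes c: "0 < c" "c < 1" and \<epsilon>: "\<epsilon> > 0"
  shows "\<exists>q1 q2 w. real_polynomial_function q1 \<and> real_polynomial_function q2
           \<and> real_polynomial_function w \<and> integral {0..1} w < \<epsilon>
           \<and> (\<forall>t\<in>{0..1}. t * q1 t \<le> (if c \<le> t then 1 else 0) \<and> (if c \<le> t then 1 else 0) \<le> t * q2 t
                          \<and> t * q2 t - t * q1 t \<le> t * (1 - t) * w t \<and> 0 \<le> w t)"
proof -
  define G where "G t = (if t < c then - 1 / (1 - t) else 1 / t)" for t :: real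
  obtain p1 p2 where p: "real_polynomial_function p1" "real_polynomial_function p2"
    "\<And>t. t \<in> {0..1} \<Longrightarrow> p1 t \<le> G t \<and> G t \<le> p2 t" "integral {0..1} (\<lambda>t. p2 t - p1 t) < \<epsilon>"
    using jump_polynomial_sandwich[OF c \<epsilon>] unfolding G_def by blast
  have jump: "(if c \<le> t then 1 else 0) = t * (1 + (1 - t) * G t)" if "t \<in> {0..1}" for t
    using that c by (auto simp: G_def field_simps)
  have between: "t * (1 + (1 - t) * p1 t) \<le> (if c \<le> t then 1 else 0)
      \<and> (if c \<le> t then 1 else 0) \<le> t * (1 + (1 - t) * p2 t)" if t: "t \<in> {0..1}" for t
  proof -
    have "t * (1 - t) * p1 t \<le> t * (1 - t) * G t" "t * (1 - t) * G t \<le> t * (1 - t) * p2 t"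
      using p(3)[OF t] t by (auto intro: mult_left_mono)
    then show ?thesis by (simp add: jump[OF t] algebra_simps)
  qed
  show ?thesis
  proof (intro exI conjI ballI)
    show "real_polynomial_function (\<lambda>t. 1 + (1 - t) * p1 t)" "real_polynomial_function (\<lambda>t. 1 + (1 - t) * p2 t)"
      "real_polynomial_function (\<lambda>t. p2 t - p1 t)"
      using p(1,2) real_polynomial_function.intros(1)[OF bounded_linear_ident]
      by (auto intro!: real_polynomial_function.intros(2-4) real_polynomial_function_diff)
  qed (use p(3,4) between in \<open>force simp: algebra_simps\<close>)+
qed

lemma hardy_littlewood_tauberian_zero:
  fixes a :: "nat \<Rightarrow> real"
  assumes conv: "\<And>y::real. \<bar>y\<bar> < 1 \<Longrightarrow> summable (\<lambda>n. a n * y ^ n)"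
    and lim: "((\<lambda>x. \<Sum>n. a n * x ^ n) \<longlongrightarrow> 0) (at_left 1)"
    and tauber: "\<And>n. n \<ge> 1 \<Longrightarrow> - K \<le> real n * a n" and K: "0 \<le> K"
  shows "(\<lambda>N. \<Sum>n\<le>N. a n) \<longlonglongrightarrow> 0"
proof -
  \<comment> \<open>with \<open>x = exp (-1/N)\<close>, \<open>g (x\<^sup>n)\<close> is the indicator of \<open>n \<le> N\<close>\<close>
  define c where "c = exp (- 1 :: real)"
  have c: "0 < c" "c < 1" by (auto simp: c_def)
  define g where "g t = (if c \<le> t then 1 else 0 :: real)" for t :: real
  have g_summable: "summable (\<lambda>n. a n * g (x ^ n))" if x: "0 < x" "x < 1" for x :: real
  proof -
    have "\<forall>\<^sub>F n in sequentially. x ^ n < c"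
      using x c by (intro order_tendstoD(2)[OF LIMSEQ_power_zero]) auto
    then obtain M where "\<And>n. n \<ge> M \<Longrightarrow> x ^ n < c" by (auto simp: eventually_sequentially)
    then show ?thesis by (intro summable_finite[of "{..<M}"]) (auto simp: g_def not_less[symmetric])
  qed
  have abel: "((\<lambda>x. \<Sum>n. a n * g (x ^ n)) \<longlongrightarrow> 0) (at_left 1)"
    using indicator_polynomial_sandwich[OF c]
    by (intro karamata_tendsto_zero[OF conv lim tauber K g_summable]) (simp_all add: g_def)
  define x where "x = (\<lambda>N::nat. exp (- 1 / real N))"
  have "filterlim x (at_left 1) sequentially"
  proof (rule tendsto_imp_filterlim_at_left)
    have "(\<lambda>N. exp (- (1 / real N))) \<longlonglongrightarrow> exp (- 0)"
      by (intro tendsto_exp tendsto_minus lim_inverse_n')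
    then show "x \<longlonglongrightarrow> 1" by (simp add: x_def)
    show "\<forall>\<^sub>F N in sequentially. x N < 1"
      using eventually_ge_at_top[of "1::nat"] by eventually_elim (auto simp: x_def)
  qed
  with abel have "(\<lambda>N. \<Sum>n. a n * g (x N ^ n)) \<longlonglongrightarrow> 0" by (rule filterlim_compose)
  moreover have "\<forall>\<^sub>F N in sequentially. (\<Sum>n. a n * g (x N ^ n)) = (\<Sum>n\<le>N. a n)"
    using eventually_ge_at_top[of "1::nat"]
  proof eventually_elim
    case (elim N)
    have "x N ^ n = exp (- real n / real N)" for n
      by (simp add: x_def exp_of_nat_mult[symmetric])
    then have "g (x N ^ n) = (if n \<le> N then 1 else 0)" for n
      using elim by (simp add: g_def c_def field_simps)
    then show ?case by (subst suminf_finite[of "{..N}"]) auto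
  qed
  ultimately show ?thesis by (rule Lim_transform_eventually)
qed

theorem hardy_littlewood_tauberian:
  fixes a :: "nat \<Rightarrow> real"
  assumes conv: "\<And>y::real. \<bar>y\<bar> < 1 \<Longrightarrow> summable (\<lambda>n. a n * y ^ n)"
    and lim: "((\<lambda>x. \<Sum>n. a n * x ^ n) \<longlongrightarrow> s) (at_left 1)"
    and tauber: "\<And>n. n \<ge> 1 \<Longrightarrow> - K \<le> real n * a n"
  shows "(\<lambda>N. \<Sum>n\<le>N. a n) \<longlonglongrightarrow> s"
proof -
  define b where "b n = a n - (if n = 0 then s else 0)" for n
  have shift: "(\<lambda>n. b n * y ^ n) sums ((\<Sum>n. a n * y ^ n) - s)" if "\<bar>y\<bar> < 1" for y :: real
  proof -
    have "(\<lambda>n. (if n = 0 then s else 0) * y ^ n) = (\<lambda>n. if n = 0 then s else 0)"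
      by (simp add: fun_eq_iff)
    then have "(\<lambda>n. (if n = 0 then s else 0) * y ^ n) sums s"
      using sums_single[of 0 "\<lambda>_. s"] by simp
    from sums_diff[OF summable_sums[OF conv[OF that]] this] show ?thesis
      by (simp add: b_def algebra_simps)
  qed
  have "((\<lambda>x. \<Sum>n. b n * x ^ n) \<longlongrightarrow> 0) (at_left 1)"
  proof -
    have "((\<lambda>x. (\<Sum>n. a n * x ^ n) - s) \<longlongrightarrow> 0) (at_left (1::real))"
      using tendsto_diff[OF lim tendsto_const[of s]] by simp
    moreover have "\<forall>\<^sub>F x in at_left 1. (\<Sum>n. a n * x ^ n) - s = (\<Sum>n. b n * x ^ n)"
      using eventually_at_left_real[of 0 "1::real", OF zero_less_one]
      by eventually_elim (use shift in \<open>auto simp: sums_iff\<close>)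
    ultimately show ?thesis by (rule Lim_transform_eventually)
  qed
  moreover have "- max K 0 \<le> real n * b n" if "n \<ge> 1" for n
    using tauber[OF that] that by (simp add: b_def)
  ultimately have "(\<lambda>N. \<Sum>n\<le>N. b n) \<longlonglongrightarrow> 0"
    using shift by (intro hardy_littlewood_tauberian_zero[where K = "max K 0"]) (auto simp: sums_iff)
  moreover have "(\<Sum>n\<le>N. b n) = (\<Sum>n\<le>N. a n) - s" for N
    by (simp add: b_def sum_subtractf sum.delta)
  ultimately show ?thesis by (simp add: LIM_zero_iff)
qed

section \<open>Cesaro weights and normalised Cesaro means\<close>

definition cesaro_weight :: "nat \<Rightarrow> nat \<Rightarrow> real" where
  "cesaro_weight p k = real ((k + p) choose p)"

lemma cesaro_weight_pos: "cesaro_weight p k > 0"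
  by (simp add: cesaro_weight_def)

lemma cesaro_weight_nonneg [simp]: "cesaro_weight p k \<ge> 0"
  by (simp add: cesaro_weight_def)

lemma cesaro_weight_ge_1: "1 \<le> cesaro_weight p k"
proof -
  have "1 \<le> (k + p) choose p" by (simp add: Suc_le_eq)
  then show ?thesis by (simp add: cesaro_weight_def)
qed

lemma cesaro_weight_nonzero [simp]: "cesaro_weight p k \<noteq> 0"
  using cesaro_weight_pos[of p k] by simp

lemma cesaro_weight_0 [simp]: "cesaro_weight p 0 = 1" "cesaro_weight 0 k = 1"
  by (simp_all add: cesaro_weight_def)

lemma sum_cesaro_weight: "(\<Sum>i\<le>k. cesaro_weight p i) = cesaro_weight (Suc p) k"
proof (induction k)
  case (Suc k)
  have "(Suc k + Suc p) choose Suc p = ((k + Suc p) choose p) + ((k + Suc p) choose Suc p)"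
    by simp
  then show ?case using Suc by (simp add: cesaro_weight_def)
qed simp

lemma cesaro_weight_Suc_left:
  "real (Suc p) * cesaro_weight (Suc p) k = real (k + Suc p) * cesaro_weight p k"
proof -
  have "Suc p * ((k + Suc p) choose Suc p) = (k + Suc p) * ((k + p) choose p)"
    using binomial_absorption[of p "k + Suc p"] by simp
  then show ?thesis unfolding cesaro_weight_def by (simp only: of_nat_mult[symmetric])
qed

lemma cesaro_weight_Suc_right:
  "real (Suc k) * cesaro_weight (Suc p) (Suc k) = real (Suc k + Suc p) * cesaro_weight (Suc p) k"
proof -
  have "Suc k * ((Suc k + Suc p) choose Suc p) = (Suc k + Suc p) * ((k + Suc p) choose Suc p)"
    using binomial_absorb_comp[of "Suc k + Suc p" "Suc p"] by simp
  then show ?thesis unfolding cesaro_weight_def by (simp only: of_nat_mult[symmetric])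
qed

lemma fact_mult_cesaro_weight:
  "fact (Suc p) * cesaro_weight (Suc p) n = (\<Prod>i<Suc p. real (n + Suc i))"
proof (induction p)
  case (Suc p)
  have "fact (Suc (Suc p)) * cesaro_weight (Suc (Suc p)) n
          = fact (Suc p) * (real (Suc (Suc p)) * cesaro_weight (Suc (Suc p)) n)"
    by (simp only: fact_Suc[of "Suc p"] ac_simps)
  also have "\<dots> = real (n + Suc (Suc p)) * (fact (Suc p) * cesaro_weight (Suc p) n)"
    by (simp only: cesaro_weight_Suc_left ac_simps)
  also have "\<dots> = real (n + Suc (Suc p)) * (\<Prod>i<Suc p. real (n + Suc i))"
    by (simp only: Suc)
  finally show ?case by (simp only: prod.lessThan_Suc[of _ "Suc p"] mult.commute)
qed (simp add: cesaro_weight_def)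

lemma powser_cauchy_product:
  fixes a b :: "nat \<Rightarrow> real"
  assumes a: "summable (\<lambda>n. norm (a n * r ^ n))" and b: "summable (\<lambda>n. norm (b n * r ^ n))"
  shows "(\<lambda>n. (\<Sum>i\<le>n. a i * b (n - i)) * r ^ n) sums ((\<Sum>n. a n * r ^ n) * (\<Sum>n. b n * r ^ n))"
    and "summable (\<lambda>n. norm ((\<Sum>i\<le>n. a i * b (n - i)) * r ^ n))"
proof -
  have eq: "(\<Sum>i\<le>n. a i * b (n - i)) * r ^ n = (\<Sum>i\<le>n. (a i * r ^ i) * (b (n - i) * r ^ (n - i)))" for n
    unfolding sum_distrib_right by (intro sum.cong refl) (simp add: power_add[symmetric] algebra_simps)
  show "(\<lambda>n. (\<Sum>i\<le>n. a i * b (n - i)) * r ^ n) sums ((\<Sum>n. a n * r ^ n) * (\<Sum>n. b n * r ^ n))"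
    unfolding eq by (rule Cauchy_product_sums[OF a b])
  have "summable (\<lambda>n. \<Sum>i\<le>n. norm (a i * r ^ i) * norm (b (n - i) * r ^ (n - i)))"
    using Cauchy_product_sums[of "\<lambda>n. norm (a n * r ^ n)" "\<lambda>n. norm (b n * r ^ n)"] a b
    by (simp add: sums_summable)
  then show "summable (\<lambda>n. norm ((\<Sum>i\<le>n. a i * b (n - i)) * r ^ n))"
    by (rule summable_comparison_test'[where N = 0]) (simp add: eq sum_abs flip: abs_mult)
qed

lemma cesaro_weight_sums:
  fixes r :: real
  assumes "\<bar>r\<bar> < 1"
  shows "(\<lambda>k. cesaro_weight p k * r ^ k) sums (1 / (1 - r) ^ Suc p)"
  using assms
proof (induction p arbitrary: r)
  case 0
  then show ?case using geometric_sums[of r] by simp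
next
  case (Suc p)
  have "summable (\<lambda>k. cesaro_weight p k * \<bar>r\<bar> ^ k)"
    using Suc.IH[of "\<bar>r\<bar>"] Suc.prems by (simp add: sums_summable)
  then have "summable (\<lambda>n. norm (cesaro_weight p n * r ^ n))"
    by (simp add: abs_mult power_abs abs_of_pos cesaro_weight_pos)
  moreover have "summable (\<lambda>n. norm (1 * r ^ n))"
    using summable_geometric[of "\<bar>r\<bar>"] Suc.prems by (simp add: power_abs)
  ultimately have "(\<lambda>n. (\<Sum>i\<le>n. cesaro_weight p i * 1) * r ^ n)
      sums ((\<Sum>n. cesaro_weight p n * r ^ n) * (\<Sum>n. 1 * r ^ n))"
    by (rule powser_cauchy_product(1))
  then show ?case
    using Suc.prems sums_unique[OF Suc.IH[OF Suc.prems], symmetric]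
    by (simp add: sum_cesaro_weight suminf_geometric mult_ac)
qed

text \<open>\<open>cesaro_avg p u n\<close> is an honest weighted average of \<open>u 0, \<dots>, u n\<close> (the weights sum to
  \<open>cesaro_weight (Suc p) n\<close>); the mean \<open>cesaro_mean (Suc p) u n\<close> of the statement is this average times
  \<open>cesaro_ratio p n \<longlonglongrightarrow> 1\<close>.\<close>
definition cesaro_num :: "nat \<Rightarrow> (nat \<Rightarrow> real) \<Rightarrow> nat \<Rightarrow> real" where
  "cesaro_num p u n = (\<Sum>k\<le>n. cesaro_weight p k * u (n - k))"

definition cesaro_avg :: "nat \<Rightarrow> (nat \<Rightarrow> real) \<Rightarrow> nat \<Rightarrow> real" where
  "cesaro_avg p u n = cesaro_num p u n / cesaro_weight (Suc p) n"

definition cesaro_ratio :: "nat \<Rightarrow> nat \<Rightarrow> real" where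
  "cesaro_ratio p n = fact (Suc p) * cesaro_weight (Suc p) n / real n ^ Suc p"

lemma cesaro_mean_eq_ratio_avg: "cesaro_mean (Suc p) u n = cesaro_ratio p n * cesaro_avg p u n"
  using cesaro_weight_pos[of "Suc p" n]
  by (simp add: cesaro_mean_def cesaro_ratio_def cesaro_avg_def cesaro_num_def cesaro_weight_def
      atLeast0AtMost)

lemma cesaro_ratio_eq_prod:
  assumes "n \<ge> 1"
  shows "cesaro_ratio p n = (\<Prod>i<Suc p. 1 + real (Suc i) / real n)"
proof -
  have "(\<Prod>i<Suc p. 1 + real (Suc i) / real n) = (\<Prod>i<Suc p. real (n + Suc i) / real n)"
    using assms by (intro prod.cong) (auto simp: field_simps)
  also have "\<dots> = (\<Prod>i<Suc p. real (n + Suc i)) / real n ^ Suc p"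
    by (simp add: prod_dividef)
  finally show ?thesis unfolding cesaro_ratio_def fact_mult_cesaro_weight by simp
qed

lemma cesaro_ratio_ge_1: "n \<ge> 1 \<Longrightarrow> cesaro_ratio p n \<ge> 1"
  unfolding cesaro_ratio_eq_prod by (intro prod_ge_1) auto

lemma cesaro_ratio_tendsto: "cesaro_ratio p \<longlonglongrightarrow> 1"
proof -
  have "(\<lambda>n. \<Prod>i<Suc p. 1 + real (Suc i) / real n) \<longlonglongrightarrow> (\<Prod>i<Suc p. 1 + 0)"
    by (intro tendsto_prod tendsto_add tendsto_const lim_const_over_n)
  moreover have "\<forall>\<^sub>F n in sequentially. (\<Prod>i<Suc p. 1 + real (Suc i) / real n) = cesaro_ratio p n"
    using eventually_ge_at_top[of "1::nat"] by eventually_elim (simp add: cesaro_ratio_eq_prod)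
  ultimately show ?thesis by (simp add: Lim_transform_eventually)
qed

lemma sum_atMost_triangle_swap:
  fixes n :: nat
  shows "(\<Sum>k\<le>n. \<Sum>i\<le>n - k. f k i) = (\<Sum>i\<le>n. \<Sum>k\<le>n - i. f k i)"
proof -
  have "(\<Sum>k\<le>n. \<Sum>i\<le>n - k. f k i) = (\<Sum>k\<le>n. \<Sum>i\<in>{i. i \<in> {..n} \<and> k + i \<le> n}. f k i)"
    by (intro sum.cong refl) auto
  also have "\<dots> = (\<Sum>i\<le>n. \<Sum>k\<in>{k. k \<in> {..n} \<and> k + i \<le> n}. f k i)"
    by (rule sum.swap_restrict) simp_all
  also have "\<dots> = (\<Sum>i\<le>n. \<Sum>k\<le>n - i. f k i)"
    by (intro sum.cong refl) auto
  finally show ?thesis .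
qed

lemma cesaro_num_eq: "cesaro_num p u n = (\<Sum>j\<le>n. cesaro_weight p (n - j) * u j)"
  unfolding cesaro_num_def
  by (rule sum.reindex_bij_witness[where i = "\<lambda>k. n - k" and j = "\<lambda>k. n - k"]) auto

lemma cesaro_num_partial_sums:
  "cesaro_num p (\<lambda>m. \<Sum>i\<le>m. e i) n = (\<Sum>j\<le>n. cesaro_weight (Suc p) (n - j) * e j)"
proof -
  have "cesaro_num p (\<lambda>m. \<Sum>i\<le>m. e i) n = (\<Sum>k\<le>n. \<Sum>i\<le>n - k. cesaro_weight p k * e i)"
    by (simp add: cesaro_num_def sum_distrib_left)
  also have "\<dots> = (\<Sum>i\<le>n. \<Sum>k\<le>n - i. cesaro_weight p k * e i)"
    by (rule sum_atMost_triangle_swap)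
  finally show ?thesis by (simp add: sum_distrib_right[symmetric] sum_cesaro_weight)
qed

lemma cesaro_weight_diff:
  assumes "Suc i \<le> n"
  shows "real n * cesaro_weight (Suc p) (Suc i) - real (n + Suc p) * cesaro_weight (Suc p) i
           = real (n - Suc i) * cesaro_weight p (Suc i)"
proof -
  define c where "c = real (Suc i + Suc p)"
  have c: "c > 0" by (simp add: c_def)
  have "c * (real n * cesaro_weight (Suc p) (Suc i) - real (n + Suc p) * cesaro_weight (Suc p) i)
      = real n * c * cesaro_weight (Suc p) (Suc i)
        - real (n + Suc p) * (real (Suc i) * cesaro_weight (Suc p) (Suc i))"
    using cesaro_weight_Suc_right[of i p] by (simp add: c_def algebra_simps)
  also have "\<dots> = (real (Suc p) * cesaro_weight (Suc p) (Suc i)) * (real n - real (Suc i))"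
    by (simp add: c_def algebra_simps)
  also have "\<dots> = c * (real (n - Suc i) * cesaro_weight p (Suc i))"
    using assms cesaro_weight_Suc_left[of p "Suc i"] by (simp add: c_def of_nat_diff)
  finally show ?thesis using c by simp
qed

lemma cesaro_num_partial_sums_diff:
  assumes "n \<ge> 1"
  shows "real n * cesaro_num p (\<lambda>m. \<Sum>i\<le>m. e i) n - real (n + Suc p) * cesaro_num p (\<lambda>m. \<Sum>i\<le>m. e i) (n - 1)
           = cesaro_num p (\<lambda>k. real k * e k) n"
proof -
  obtain n' where n: "n = Suc n'" using assms by (cases n) auto
  have "real n * cesaro_num p (\<lambda>m. \<Sum>i\<le>m. e i) n - real (n + Suc p) * cesaro_num p (\<lambda>m. \<Sum>i\<le>m. e i) (n - 1)
      = (\<Sum>j\<le>n'. (real n * cesaro_weight (Suc p) (Suc (n' - j))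
                   - real (n + Suc p) * cesaro_weight (Suc p) (n' - j)) * e j) + real n * e n"
    unfolding cesaro_num_partial_sums n
    by (simp add: Suc_diff_le sum_distrib_left sum_subtractf algebra_simps)
  also have "\<dots> = (\<Sum>j\<le>n'. cesaro_weight p (n - j) * (real j * e j)) + real n * e n"
    using cesaro_weight_diff[of _ n p] by (intro arg_cong2[where f = "(+)"] sum.cong) (auto simp: n Suc_diff_le)
  also have "\<dots> = cesaro_num p (\<lambda>k. real k * e k) n"
    by (simp add: cesaro_num_eq n)
  finally show ?thesis .
qed

lemma cesaro_avg_partial_sums_diff:
  assumes "n \<ge> 1"
  shows "real n * (cesaro_avg p (\<lambda>m. \<Sum>i\<le>m. e i) n - cesaro_avg p (\<lambda>m. \<Sum>i\<le>m. e i) (n - 1))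
           = cesaro_avg p (\<lambda>k. real k * e k) n"
proof -
  define N where "N = cesaro_num p (\<lambda>m. \<Sum>i\<le>m. e i)"
  define W where "W = cesaro_weight (Suc p)"
  have "real n * W n = real (n + Suc p) * W (n - 1)"
    using cesaro_weight_Suc_right[of "n - 1" p] assms by (simp add: W_def)
  then have ratio: "real n / W (n - 1) = real (n + Suc p) / W n"
    by (simp add: W_def frac_eq_eq)
  have "real n * (cesaro_avg p (\<lambda>m. \<Sum>i\<le>m. e i) n - cesaro_avg p (\<lambda>m. \<Sum>i\<le>m. e i) (n - 1))
      = real n * N n / W n - real n / W (n - 1) * N (n - 1)"
    by (simp add: cesaro_avg_def N_def W_def algebra_simps)
  also have "\<dots> = (real n * N n - real (n + Suc p) * N (n - 1)) / W n"
    unfolding ratio by (simp add: diff_divide_distrib)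
  finally show ?thesis
    using cesaro_num_partial_sums_diff[OF assms, of p e] by (simp add: N_def W_def cesaro_avg_def)
qed

lemma weighted_suminf_tendsto:
  fixes w :: "'a \<Rightarrow> nat \<Rightarrow> real"
  assumes weights: "\<forall>\<^sub>F x in F. (\<forall>n. 0 \<le> w x n) \<and> w x sums 1"
    and vanish: "\<And>n. ((\<lambda>x. w x n) \<longlongrightarrow> 0) F" and v: "v \<longlonglongrightarrow> l"
  shows "((\<lambda>x. \<Sum>n. w x n * v n) \<longlongrightarrow> l) F"
proof (rule tendstoI)
  fix \<epsilon> :: real assume \<epsilon>: "\<epsilon> > 0"
  obtain B where B: "\<And>n. \<bar>v n - l\<bar> \<le> B"
    using convergent_imp_Bseq[of "\<lambda>n. v n - l"] v LIM_zero[OF v]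
    by (auto simp: convergent_def Bseq_def)
  obtain N where N: "\<And>n. n \<ge> N \<Longrightarrow> \<bar>v n - l\<bar> < \<epsilon> / 2"
    using LIMSEQ_D[OF v, of "\<epsilon> / 2"] \<epsilon> by auto
  have "((\<lambda>x. \<Sum>n<N. w x n * \<bar>v n - l\<bar>) \<longlongrightarrow> (\<Sum>n<N. 0 * \<bar>v n - l\<bar>)) F"
    by (intro tendsto_sum tendsto_mult vanish tendsto_const)
  then have "\<forall>\<^sub>F x in F. (\<Sum>n<N. w x n * \<bar>v n - l\<bar>) < \<epsilon> / 2"
    using \<epsilon> by (intro order_tendstoD(2)) auto
  with weights show "\<forall>\<^sub>F x in F. dist (\<Sum>n. w x n * v n) l < \<epsilon>"
  proof eventually_elim
    case (elim x)
    then have w: "\<And>n. 0 \<le> w x n" "w x sums 1" by auto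
    define bound where "bound n = (if n < N then w x n * \<bar>v n - l\<bar> else 0) + \<epsilon> / 2 * w x n" for n
    have bound: "bound sums ((\<Sum>n<N. w x n * \<bar>v n - l\<bar>) + \<epsilon> / 2)"
      unfolding bound_def
      using sums_add[OF sums_If_finite_set[of "{..<N}" "\<lambda>n. w x n * \<bar>v n - l\<bar>"] sums_mult[OF w(2), of "\<epsilon> / 2"]]
      by simp
    have le: "\<bar>w x n * (v n - l)\<bar> \<le> bound n" for n
      using N[of n] w(1)[of n] \<epsilon> mult_left_mono[of "\<bar>v n - l\<bar>" "\<epsilon> / 2" "w x n"]
      by (auto simp: bound_def abs_mult mult.commute)
    have "summable (\<lambda>n. w x n * (v n - l))"
      using le by (intro summable_comparison_test'[OF sums_summable[OF bound]]) auto
    then have diff: "(\<lambda>n. w x n * (v n - l)) sums (\<Sum>n. w x n * (v n - l))"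
      by (rule summable_sums)
    have "(\<lambda>n. w x n * (v n - l) + l * w x n) sums ((\<Sum>n. w x n * (v n - l)) + l * 1)"
      using diff w(2) by (intro sums_add sums_mult)
    then have "(\<Sum>n. w x n * v n) - l = (\<Sum>n. w x n * (v n - l))"
      by (simp add: sums_iff algebra_simps)
    also have "\<bar>\<dots>\<bar> \<le> (\<Sum>n<N. w x n * \<bar>v n - l\<bar>) + \<epsilon> / 2"
    proof -
      have "w x n * (v n - l) \<le> bound n" "- bound n \<le> w x n * (v n - l)" for n
        using le[of n] by (simp_all add: abs_le_iff)
      then show ?thesis
        using sums_le[OF _ diff bound] sums_le[OF _ sums_minus[OF bound] diff] by (simp add: abs_le_iff)
    qed
    finally show ?case using elim by (simp add: dist_real_def)
  qed
qed

lemma cesaro_avg_tendsto: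
  assumes "v \<longlonglongrightarrow> l"
  shows "cesaro_avg p v \<longlonglongrightarrow> l"
proof -
  define w where "w n j = (if j \<le> n then cesaro_weight p (n - j) / cesaro_weight (Suc p) n else 0)" for n j
  have avg: "cesaro_avg p v n = (\<Sum>j. w n j * v j)" for n
    by (subst suminf_finite[of "{..n}"])
      (auto simp: w_def cesaro_avg_def cesaro_num_eq sum_divide_distrib)
  have "w n sums (\<Sum>j\<le>n. cesaro_weight p (n - j) / cesaro_weight (Suc p) n)" for n
    unfolding w_def atMost_iff[symmetric] by (rule sums_If_finite_set) simp
  moreover have "(\<Sum>j\<le>n. cesaro_weight p (n - j) / cesaro_weight (Suc p) n) = 1" for n
    using cesaro_num_eq[of p "\<lambda>_. 1" n, symmetric]
    by (simp add: cesaro_num_def sum_cesaro_weight flip: sum_divide_distrib)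
  ultimately have weights: "\<forall>\<^sub>F n in sequentially. (\<forall>j. 0 \<le> w n j) \<and> w n sums 1"
    by (simp add: always_eventually w_def)
  have "(\<lambda>n. w n j) \<longlonglongrightarrow> 0" for j
  proof (rule tendsto_sandwich[OF _ _ tendsto_const])
    have "cesaro_weight p n / cesaro_weight (Suc p) n = real (Suc p) / real (n + Suc p)" for n
      using cesaro_weight_Suc_left[of p n] by (simp add: field_simps)
    then show "(\<lambda>n. cesaro_weight p n / cesaro_weight (Suc p) n) \<longlonglongrightarrow> 0"
      using LIMSEQ_ignore_initial_segment[OF lim_const_over_n[of "real (Suc p)"], of "Suc p"] by simp
    have "cesaro_weight p (n - j) \<le> cesaro_weight p n" for n
      by (simp add: cesaro_weight_def binomial_right_mono)
    then show "\<forall>\<^sub>F n in sequentially. w n j \<le> cesaro_weight p n / cesaro_weight (Suc p) n"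
      by (intro always_eventually allI) (simp add: w_def divide_right_mono)
  qed (simp add: always_eventually w_def)
  then show ?thesis
    unfolding avg by (rule weighted_suminf_tendsto[OF weights _ assms])
qed

lemma cesaro_mean_tendsto:
  assumes "v \<longlonglongrightarrow> l"
  shows "(\<lambda>n. cesaro_mean (Suc p) v n) \<longlonglongrightarrow> l"
  using tendsto_mult[OF cesaro_ratio_tendsto cesaro_avg_tendsto[OF assms]]
  by (simp add: cesaro_mean_eq_ratio_avg)

lemma cesaro_avg_lower_bound:
  assumes "n \<ge> 1" "- K < cesaro_mean (Suc p) u n"
  shows "min 0 (- K) \<le> cesaro_avg p u n"
proof (cases "cesaro_avg p u n \<ge> 0")
  case False
  then have "cesaro_ratio p n * cesaro_avg p u n \<le> 1 * cesaro_avg p u n"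
    using cesaro_ratio_ge_1[OF assms(1)] by (intro mult_right_mono_neg) auto
  then show ?thesis using assms(2) by (simp add: cesaro_mean_eq_ratio_avg)
qed simp

lemma abs_cesaro_avg_le:
  assumes "\<And>k. \<bar>u k\<bar> \<le> B"
  shows "\<bar>cesaro_avg p u n\<bar> \<le> B"
proof -
  have "\<bar>cesaro_num p u n\<bar> \<le> (\<Sum>k\<le>n. cesaro_weight p k * B)"
    unfolding cesaro_num_def
    by (rule order.trans[OF sum_abs sum_mono]) (simp add: abs_mult assms mult_left_mono)
  also have "\<dots> = B * cesaro_weight (Suc p) n"
    by (simp add: sum_cesaro_weight flip: sum_distrib_right)
  finally show ?thesis by (simp add: cesaro_avg_def abs_divide cesaro_weight_pos divide_le_eq)
qed

lemma cesaro_avg_diff: "cesaro_avg p (\<lambda>k. f k - g k) n = cesaro_avg p f n - cesaro_avg p g n"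
  by (simp add: cesaro_avg_def cesaro_num_def right_diff_distrib sum_subtractf diff_divide_distrib)

lemma cesaro_mean_add: "cesaro_mean m (\<lambda>k. f k + g k) n = cesaro_mean m f n + cesaro_mean m g n"
  by (simp add: cesaro_mean_def distrib_left sum.distrib)

lemma cesaro_lim_iff_cesaro_avg_tendsto:
  "cesaro_lim (Suc p) u l \<longleftrightarrow> cesaro_avg p u \<longlonglongrightarrow> l"
proof
  assume "cesaro_avg p u \<longlonglongrightarrow> l"
  from tendsto_mult[OF cesaro_ratio_tendsto this] show "cesaro_lim (Suc p) u l"
    by (simp add: cesaro_lim_def cesaro_mean_eq_ratio_avg)
next
  assume "cesaro_lim (Suc p) u l"
  then have "(\<lambda>n. cesaro_mean (Suc p) u n / cesaro_ratio p n) \<longlonglongrightarrow> l / 1"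
    unfolding cesaro_lim_def by (intro tendsto_divide cesaro_ratio_tendsto) auto
  moreover have "\<forall>\<^sub>F n in sequentially. cesaro_mean (Suc p) u n / cesaro_ratio p n = cesaro_avg p u n"
    using eventually_ge_at_top[of 1]
  proof eventually_elim
    case (elim n)
    then have "cesaro_ratio p n \<noteq> 0" using cesaro_ratio_ge_1[of n p] by simp
    then show ?case by (simp add: cesaro_mean_eq_ratio_avg)
  qed
  ultimately show "cesaro_avg p u \<longlonglongrightarrow> l" by (simp add: Lim_transform_eventually)
qed

lemma cesaro_lim_add_convergent:
  assumes "v \<longlonglongrightarrow> l'"
  shows "cesaro_lim (Suc p) (\<lambda>n. u n + v n) (l + l') \<longleftrightarrow> cesaro_lim (Suc p) u l"
proof -
  have v: "(\<lambda>n. cesaro_mean (Suc p) v n) \<longlonglongrightarrow> l'" by (rule cesaro_mean_tendsto[OF assms])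
  show ?thesis
    unfolding cesaro_lim_def cesaro_mean_add
    using tendsto_add[OF _ v, of "\<lambda>n. cesaro_mean (Suc p) u n" l]
      tendsto_diff[OF _ v, of "\<lambda>n. cesaro_mean (Suc p) u n + cesaro_mean (Suc p) v n" "l + l'"]
    by auto
qed

lemma summable_norm_powser_inside:
  fixes e :: "nat \<Rightarrow> real"
  assumes "\<And>y::real. \<bar>y\<bar> < 1 \<Longrightarrow> summable (\<lambda>n. e n * y ^ n)" "\<bar>r\<bar> < 1"
  shows "summable (\<lambda>n. norm (e n * r ^ n))"
proof (rule powser_insidea)
  show "summable (\<lambda>n. e n * ((1 + \<bar>r\<bar>) / 2) ^ n)" using assms by (intro assms(1)) auto
qed (use assms in auto)

lemma cesaro_num_partial_sums_powser:
  fixes e :: "nat \<Rightarrow> real"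
  assumes conv: "\<And>y::real. \<bar>y\<bar> < 1 \<Longrightarrow> summable (\<lambda>n. e n * y ^ n)" and r: "\<bar>r\<bar> < 1"
  shows "(\<lambda>n. cesaro_num p (\<lambda>m. \<Sum>i\<le>m. e i) n * r ^ n) sums ((\<Sum>n. e n * r ^ n) / (1 - r) ^ Suc (Suc p))"
    and "summable (\<lambda>n. norm (cesaro_num p (\<lambda>m. \<Sum>i\<le>m. e i) n * r ^ n))"
proof -
  have num: "cesaro_num p (\<lambda>m. \<Sum>i\<le>m. e i) n = (\<Sum>i\<le>n. e i * cesaro_weight (Suc p) (n - i))" for n
    by (simp add: cesaro_num_partial_sums mult.commute)
  have "summable (\<lambda>n. cesaro_weight (Suc p) n * \<bar>r\<bar> ^ n)"
    using cesaro_weight_sums[of "\<bar>r\<bar>" "Suc p"] r by (simp add: sums_summable)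
  then have W: "summable (\<lambda>n. norm (cesaro_weight (Suc p) n * r ^ n))"
    by (simp add: abs_mult power_abs)
  note cauchy = powser_cauchy_product[OF summable_norm_powser_inside[OF conv r] W]
  show "(\<lambda>n. cesaro_num p (\<lambda>m. \<Sum>i\<le>m. e i) n * r ^ n) sums ((\<Sum>n. e n * r ^ n) / (1 - r) ^ Suc (Suc p))"
    using cauchy(1) sums_unique[OF cesaro_weight_sums[OF r, of "Suc p"], symmetric] by (simp add: num)
  show "summable (\<lambda>n. norm (cesaro_num p (\<lambda>m. \<Sum>i\<le>m. e i) n * r ^ n))"
    using cauchy(2) by (simp add: num)
qed

section \<open>Abel means of Cesaro means\<close>

definition powser_integral :: "(nat \<Rightarrow> real) \<Rightarrow> nat \<Rightarrow> real" where
  "powser_integral f n = (if n = 0 then 0 else f (n - 1) / real n)"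

lemma summable_powser_integral:
  fixes f :: "nat \<Rightarrow> real"
  assumes "\<And>y::real. \<bar>y\<bar> < 1 \<Longrightarrow> summable (\<lambda>n. f n * y ^ n)" and r: "\<bar>r\<bar> < 1"
  shows "summable (\<lambda>n. powser_integral f n * r ^ n)"
proof -
  have "summable (\<lambda>n. powser_integral f (Suc n) * r ^ Suc n)"
  proof (rule summable_comparison_test'[OF summable_norm_powser_inside[OF assms]])
    fix n
    have "\<bar>f n\<bar> * \<bar>r\<bar> ^ n * \<bar>r\<bar> / real (Suc n) \<le> \<bar>f n\<bar> * \<bar>r\<bar> ^ n * 1 / 1"
      using r by (intro frac_le mult_left_mono) auto
    then show "norm (powser_integral f (Suc n) * r ^ Suc n) \<le> norm (f n * r ^ n)"
      by (simp add: powser_integral_def abs_mult power_abs field_simps)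
  qed
  then show ?thesis by (subst summable_Suc_iff[symmetric])
qed

lemma summable_funpow_powser_integral:
  fixes f :: "nat \<Rightarrow> real"
  assumes "\<And>y::real. \<bar>y\<bar> < 1 \<Longrightarrow> summable (\<lambda>n. f n * y ^ n)" and "\<bar>r\<bar> < 1"
  shows "summable (\<lambda>n. (powser_integral ^^ j) f n * r ^ n)"
  using assms(2)
proof (induction j arbitrary: r)
  case (Suc j)
  then show ?case using summable_powser_integral by simp
qed (use assms in simp)

lemma funpow_powser_integral:
  "(powser_integral ^^ j) f n = (if n < j then 0 else f (n - j) * fact (n - j) / fact n)"
proof (induction j arbitrary: n)
  case (Suc j)
  show ?case
  proof (cases n)
    case (Suc n')
    have "(powser_integral ^^ Suc j) f n = (powser_integral ^^ j) f n' / real (Suc n')"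
      by (simp add: powser_integral_def Suc)
    then show ?thesis using Suc.IH[of n'] by (simp add: Suc divide_divide_eq_left mult.commute)
  qed (simp add: powser_integral_def)
qed simp

lemma has_real_derivative_inverse_power_one_minus:
  fixes r :: real
  assumes "r < 1"
  shows "((\<lambda>r. inverse ((1 - r) ^ k)) has_real_derivative real k / (1 - r) ^ Suc k) (at r)"
proof -
  have "((\<lambda>r. inverse ((1 - r) ^ k)) has_real_derivative
          - (real k * (1 - r) ^ (k - 1) * (0 - 1)) * inverse ((1 - r) ^ k) ^ 2) (at r)"
    using assms by (auto intro!: derivative_eq_intros simp: power2_eq_square)
  moreover have "real k * u ^ (k - 1) * inverse (u ^ k) ^ 2 = real k / u ^ Suc k" if "u > 0" for u :: real
    using that by (cases k) (simp_all add: power2_eq_square field_simps)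
  ultimately show ?thesis using assms by simp
qed

lemma abel_powser_integral:
  fixes f :: "nat \<Rightarrow> real"
  assumes k: "k \<ge> 1" and conv: "\<And>y::real. \<bar>y\<bar> < 1 \<Longrightarrow> summable (\<lambda>n. f n * y ^ n)"
    and lim: "((\<lambda>r. (1 - r) ^ Suc k * (\<Sum>n. f n * r ^ n)) \<longlongrightarrow> c) (at_left 1)"
  shows "((\<lambda>r. (1 - r) ^ k * (\<Sum>n. powser_integral f n * r ^ n)) \<longlongrightarrow> c / real k) (at_left 1)"
proof -
  have ev: "\<forall>\<^sub>F r in at_left 1. r \<in> {0<..<1::real}"
    using eventually_at_left_real[of 0 "1::real"] by simp
  have deriv: "((\<lambda>r. \<Sum>n. powser_integral f n * r ^ n) has_real_derivative (\<Sum>n. f n * r ^ n)) (at r)"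
    if "r \<in> {0<..<1}" for r :: real
  proof -
    have "diffs (powser_integral f) = f" by (simp add: diffs_def powser_integral_def fun_eq_iff)
    then show ?thesis
      using termdiffs_strong'[of 1 "powser_integral f" r] that summable_powser_integral[OF conv] by simp
  qed
  have top: "LIM r at_left (1::real). inverse ((1 - r) ^ k) :> at_top"
  proof (rule filterlim_inverse_at_top)
    show "((\<lambda>r::real. (1 - r) ^ k) \<longlongrightarrow> 0) (at_left 1)"
    proof -
      have "((\<lambda>r::real. (1 - r) ^ k) \<longlongrightarrow> (1 - 1) ^ k) (at_left 1)" by (intro tendsto_intros)
      then show ?thesis using k by (simp add: power_0_left)
    qed
    show "\<forall>\<^sub>F r in at_left (1::real). 0 < (1 - r) ^ k" using ev by eventually_elim auto
  qed
  have "((\<lambda>r. (\<Sum>n. f n * r ^ n) / (real k / (1 - r) ^ Suc k)) \<longlongrightarrow> c / real k) (at_left 1)"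
  proof (rule Lim_transform_eventually)
    show "((\<lambda>r. (1 - r) ^ Suc k * (\<Sum>n. f n * r ^ n) / real k) \<longlongrightarrow> c / real k) (at_left 1)"
      using lim by (intro tendsto_divide tendsto_const) (use k in auto)
    show "\<forall>\<^sub>F r in at_left 1. (1 - r) ^ Suc k * (\<Sum>n. f n * r ^ n) / real k
                              = (\<Sum>n. f n * r ^ n) / (real k / (1 - r) ^ Suc k)"
      using ev by eventually_elim (simp add: field_simps)
  qed
  then have "((\<lambda>r. (\<Sum>n. powser_integral f n * r ^ n) / inverse ((1 - r) ^ k)) \<longlongrightarrow> c / real k) (at_left 1)"
  proof (rule lhopital_left_at_top[OF top, rotated 3])
    show "\<forall>\<^sub>F r in at_left (1::real). real k / (1 - r) ^ Suc k \<noteq> 0"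
      using ev by eventually_elim (use k in auto)
    show "\<forall>\<^sub>F r in at_left (1::real). ((\<lambda>r. \<Sum>n. powser_integral f n * r ^ n) has_real_derivative (\<Sum>n. f n * r ^ n)) (at r)"
      using ev by eventually_elim (rule deriv)
    show "\<forall>\<^sub>F r in at_left (1::real). ((\<lambda>r. inverse ((1 - r) ^ k)) has_real_derivative real k / (1 - r) ^ Suc k) (at r)"
      using ev by eventually_elim (simp add: has_real_derivative_inverse_power_one_minus del: power_Suc)
  qed
  then show ?thesis by (simp add: divide_inverse_commute)
qed

lemma abel_funpow_powser_integral:
  fixes f :: "nat \<Rightarrow> real"
  assumes conv: "\<And>y::real. \<bar>y\<bar> < 1 \<Longrightarrow> summable (\<lambda>n. f n * y ^ n)"
    and lim: "((\<lambda>r. (1 - r) ^ (Suc k + j) * (\<Sum>n. f n * r ^ n)) \<longlongrightarrow> c) (at_left 1)"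
  shows "((\<lambda>r. (1 - r) ^ Suc k * (\<Sum>n. (powser_integral ^^ j) f n * r ^ n))
            \<longlongrightarrow> c * fact k / fact (k + j)) (at_left 1)"
  using lim
proof (induction j arbitrary: k)
  case (Suc j)
  have "((\<lambda>r. (1 - r) ^ Suc (Suc k) * (\<Sum>n. (powser_integral ^^ j) f n * r ^ n))
          \<longlongrightarrow> c * fact (Suc k) / fact (Suc k + j)) (at_left 1)"
    using Suc.IH[of "Suc k"] Suc.prems by simp
  then have "((\<lambda>r. (1 - r) ^ Suc k * (\<Sum>n. powser_integral ((powser_integral ^^ j) f) n * r ^ n))
          \<longlongrightarrow> c * fact (Suc k) / fact (Suc k + j) / real (Suc k)) (at_left 1)"
    by (intro abel_powser_integral summable_funpow_powser_integral[OF conv]) simp_all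
  moreover have "c * fact (Suc k) / fact (Suc k + j) / real (Suc k) = c * fact k / fact (k + Suc j)"
    by (simp del: fact_Suc add: fact_Suc[of k])
  ultimately show ?case by simp
qed simp

lemma funpow_powser_integral_cesaro_num:
  "(powser_integral ^^ Suc p) (cesaro_num p u) (i + Suc p) = cesaro_avg p u i / fact (Suc p)"
proof -
  have "fact (Suc p) * fact i * ((i + Suc p) choose Suc p) = (fact (i + Suc p) :: nat)"
    using binomial_fact_lemma[of "Suc p" "i + Suc p"] by (simp del: fact_Suc)
  then have "real (fact (Suc p) * fact i * ((i + Suc p) choose Suc p)) = real (fact (i + Suc p))"
    by (rule arg_cong)
  then have fact_eq: "fact (Suc p) * fact i * cesaro_weight (Suc p) i = fact (i + Suc p)"
    unfolding cesaro_weight_def by (simp only: of_nat_mult of_nat_fact)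
  have "(powser_integral ^^ Suc p) (cesaro_num p u) (i + Suc p) = cesaro_num p u i * fact i / fact (i + Suc p)"
    unfolding funpow_powser_integral by (simp del: fact_Suc)
  also have "\<dots> = cesaro_num p u i / cesaro_weight (Suc p) i / fact (Suc p)"
    unfolding fact_eq[symmetric] by (simp del: fact_Suc)
  finally show ?thesis by (simp only: cesaro_avg_def)
qed

lemma summable_cesaro_avg_partial_sums:
  fixes e :: "nat \<Rightarrow> real"
  assumes conv: "\<And>y::real. \<bar>y\<bar> < 1 \<Longrightarrow> summable (\<lambda>n. e n * y ^ n)" and r: "\<bar>r\<bar> < 1"
  shows "summable (\<lambda>n. cesaro_avg p (\<lambda>m. \<Sum>i\<le>m. e i) n * r ^ n)"
proof (rule summable_comparison_test'[OF cesaro_num_partial_sums_powser(2)[OF conv r, of p]])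
  fix n
  have "\<bar>cesaro_avg p (\<lambda>m. \<Sum>i\<le>m. e i) n\<bar> \<le> \<bar>cesaro_num p (\<lambda>m. \<Sum>i\<le>m. e i) n\<bar>"
    using divide_left_mono[OF cesaro_weight_ge_1[of "Suc p" n], of "\<bar>cesaro_num p (\<lambda>m. \<Sum>i\<le>m. e i) n\<bar>"]
    by (simp add: cesaro_avg_def abs_divide cesaro_weight_pos)
  then show "norm (cesaro_avg p (\<lambda>m. \<Sum>i\<le>m. e i) n * r ^ n)
               \<le> norm (cesaro_num p (\<lambda>m. \<Sum>i\<le>m. e i) n * r ^ n)"
    by (simp add: abs_mult mult_right_mono)
qed

lemma suminf_funpow_powser_integral_cesaro_num:
  assumes "summable (\<lambda>n. cesaro_avg p u n * r ^ n)"
  shows "(\<Sum>n. (powser_integral ^^ Suc p) (cesaro_num p u) n * r ^ n)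
           = r ^ Suc p / fact (Suc p) * (\<Sum>n. cesaro_avg p u n * r ^ n)"
proof -
  define f where "f = (\<lambda>n. (powser_integral ^^ Suc p) (cesaro_num p u) n * r ^ n)"
  have "(\<lambda>i. r ^ Suc p / fact (Suc p) * (cesaro_avg p u i * r ^ i))
          sums (r ^ Suc p / fact (Suc p) * (\<Sum>n. cesaro_avg p u n * r ^ n))"
    using assms by (intro sums_mult summable_sums)
  moreover have "r ^ Suc p / fact (Suc p) * (cesaro_avg p u i * r ^ i) = f (i + Suc p)" for i
    unfolding f_def funpow_powser_integral_cesaro_num by (simp add: power_add)
  ultimately have "f sums (r ^ Suc p / fact (Suc p) * (\<Sum>n. cesaro_avg p u n * r ^ n) + (\<Sum>i<Suc p. f i))"
    by (intro sums_iff_shift[THEN iffD1]) simp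
  moreover have "(\<Sum>i<Suc p. f i) = 0"
    by (intro sum.neutral) (simp add: f_def funpow_powser_integral del: funpow.simps)
  ultimately have "f sums (r ^ Suc p / fact (Suc p) * (\<Sum>n. cesaro_avg p u n * r ^ n))" by simp
  then show ?thesis unfolding f_def by (rule sums_unique[symmetric])
qed

text \<open>Integrating the series \<open>\<Sum>n. cesaro_num p S n * r\<^sup>n = F(r) / (1 - r)\<^sup>p\<^sup>+\<^sup>2\<close> termwise
  \<open>p + 1\<close> times divides its \<open>n\<close>-th coefficient by \<open>(n+1) \<cdots> (n+p+1)\<close>, which turns it into
  the normalised mean \<open>cesaro_avg p S n\<close>; each integration lowers the order of the pole by one.\<close>
lemma abel_cesaro_avg:
  fixes e :: "nat \<Rightarrow> real"
  assumes conv: "\<And>y::real. \<bar>y\<bar> < 1 \<Longrightarrow> summable (\<lambda>n. e n * y ^ n)"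
    and lim: "((\<lambda>r. \<Sum>n. e n * r ^ n) \<longlongrightarrow> a) (at_left 1)"
  shows "((\<lambda>r. (1 - r) * (\<Sum>n. cesaro_avg p (\<lambda>m. \<Sum>i\<le>m. e i) n * r ^ n)) \<longlongrightarrow> a) (at_left 1)"
proof -
  define N where "N = cesaro_num p (\<lambda>m. \<Sum>i\<le>m. e i)"
  define \<sigma> where "\<sigma> = cesaro_avg p (\<lambda>m. \<Sum>i\<le>m. e i)"
  have ev: "\<forall>\<^sub>F r in at_left 1. r \<in> {0<..<1::real}"
    using eventually_at_left_real[of 0 "1::real"] by simp
  have convN: "summable (\<lambda>n. N n * y ^ n)" if "\<bar>y\<bar> < 1" for y :: real
    unfolding N_def using cesaro_num_partial_sums_powser(2)[OF conv that] by (rule summable_norm_cancel)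
  have "((\<lambda>r. (1 - r) ^ (Suc 0 + Suc p) * (\<Sum>n. N n * r ^ n)) \<longlongrightarrow> a) (at_left 1)"
  proof (rule Lim_transform_eventually[OF lim])
    show "\<forall>\<^sub>F r in at_left 1. (\<Sum>n. e n * r ^ n) = (1 - r) ^ (Suc 0 + Suc p) * (\<Sum>n. N n * r ^ n)"
      using ev
    proof eventually_elim
      case (elim r)
      then have "(\<Sum>n. N n * r ^ n) = (\<Sum>n. e n * r ^ n) / (1 - r) ^ (Suc 0 + Suc p)"
        unfolding N_def using cesaro_num_partial_sums_powser(1)[OF conv] by (simp add: sums_iff)
      then show ?case using elim by simp
    qed
  qed
  from abel_funpow_powser_integral[OF convN this]
  have integrated: "((\<lambda>r. (1 - r) * (\<Sum>n. (powser_integral ^^ Suc p) N n * r ^ n)) \<longlongrightarrow> a / fact (Suc p))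
                      (at_left 1)"
    by simp
  have shift: "(\<Sum>n. (powser_integral ^^ Suc p) N n * r ^ n) = r ^ Suc p / fact (Suc p) * (\<Sum>n. \<sigma> n * r ^ n)"
    if "\<bar>r\<bar> < 1" for r :: real
    unfolding N_def \<sigma>_def
    by (rule suminf_funpow_powser_integral_cesaro_num[OF summable_cesaro_avg_partial_sums[OF conv that]])
  have "((\<lambda>r. fact (Suc p) / r ^ Suc p * ((1 - r) * (\<Sum>n. (powser_integral ^^ Suc p) N n * r ^ n)))
          \<longlongrightarrow> fact (Suc p) / 1 ^ Suc p * (a / fact (Suc p))) (at_left 1)"
    by (intro tendsto_intros integrated) auto
  then have "((\<lambda>r. fact (Suc p) / r ^ Suc p * ((1 - r) * (\<Sum>n. (powser_integral ^^ Suc p) N n * r ^ n)))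
               \<longlongrightarrow> a) (at_left 1)"
    by simp
  moreover have "\<forall>\<^sub>F r in at_left 1.
      fact (Suc p) / r ^ Suc p * ((1 - r) * (\<Sum>n. (powser_integral ^^ Suc p) N n * r ^ n))
        = (1 - r) * (\<Sum>n. cesaro_avg p (\<lambda>m. \<Sum>i\<le>m. e i) n * r ^ n)"
    using ev by eventually_elim (simp add: shift \<sigma>_def del: funpow.simps fact_Suc power_Suc)
  ultimately show ?thesis by (rule Lim_transform_eventually)
qed

lemma abel_tendsto_if_cesaro_avg_tendsto:
  fixes e :: "nat \<Rightarrow> real"
  assumes conv: "\<And>y::real. \<bar>y\<bar> < 1 \<Longrightarrow> summable (\<lambda>n. e n * y ^ n)"
    and lim: "cesaro_avg p (\<lambda>m. \<Sum>i\<le>m. e i) \<longlonglongrightarrow> a"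
  shows "((\<lambda>r. \<Sum>n. e n * r ^ n) \<longlongrightarrow> a) (at_left 1)"
proof -
  define w where "w r n = (1 - r) ^ Suc (Suc p) * (cesaro_weight (Suc p) n * r ^ n)" for r :: real and n
  have ev: "\<forall>\<^sub>F r in at_left 1. r \<in> {0<..<1::real}"
    using eventually_at_left_real[of 0 "1::real"] by simp
  have "\<forall>\<^sub>F r in at_left 1. (\<forall>n. 0 \<le> w r n) \<and> w r sums 1"
    using ev
  proof eventually_elim
    case (elim r)
    then have "w r sums ((1 - r) ^ Suc (Suc p) * (1 / (1 - r) ^ Suc (Suc p)))"
      unfolding w_def by (intro sums_mult cesaro_weight_sums) auto
    then show ?case using elim by (simp add: w_def)
  qed
  moreover have "((\<lambda>r. w r n) \<longlongrightarrow> 0) (at_left 1)" for n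
    unfolding w_def by (auto intro!: tendsto_eq_intros)
  ultimately have "((\<lambda>r. \<Sum>n. w r n * cesaro_avg p (\<lambda>m. \<Sum>i\<le>m. e i) n) \<longlongrightarrow> a) (at_left 1)"
    using lim by (rule weighted_suminf_tendsto)
  moreover have "\<forall>\<^sub>F r in at_left 1. (\<Sum>n. w r n * cesaro_avg p (\<lambda>m. \<Sum>i\<le>m. e i) n) = (\<Sum>n. e n * r ^ n)"
    using ev
  proof eventually_elim
    case (elim r)
    then have r: "\<bar>r\<bar> < 1" "r < 1" by auto
    have "w r n * cesaro_avg p (\<lambda>m. \<Sum>i\<le>m. e i) n
            = (1 - r) ^ Suc (Suc p) * (cesaro_num p (\<lambda>m. \<Sum>i\<le>m. e i) n * r ^ n)" for n
      by (simp add: w_def cesaro_avg_def)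
    then show ?case
      using sums_mult[OF cesaro_num_partial_sums_powser(1)[OF conv r(1)], of "(1 - r) ^ Suc (Suc p)" p] r(2)
      by (simp add: sums_iff del: power_Suc)
  qed
  ultimately show ?thesis by (rule Lim_transform_eventually)
qed

section \<open>The Tauberian theorem for Cesaro means\<close>

lemma sums_backward_difference:
  fixes u :: "nat \<Rightarrow> real"
  assumes "(\<lambda>n. u n * r ^ n) sums S"
  shows "(\<lambda>n. (u n - (if n = 0 then 0 else u (n - 1))) * r ^ n) sums ((1 - r) * S)"
proof -
  have "(\<lambda>n. (if n = 0 then 0 else u (n - 1)) * r ^ n) sums (r * S)"
    using sums_Suc_iff[where f = "\<lambda>n. (if n = 0 then 0 else u (n - 1)) * r ^ n", THEN iffD1]
      sums_mult[OF assms, of r]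
    by (simp add: algebra_simps)
  from sums_diff[OF assms this] show ?thesis by (simp add: algebra_simps)
qed

lemma sum_backward_difference:
  fixes u :: "nat \<Rightarrow> real" and N :: nat
  shows "(\<Sum>n\<le>N. u n - (if n = 0 then 0 else u (n - 1))) = u N"
  by (induction N) auto

lemma cesaro_avg_tendsto_if_abel:
  fixes e :: "nat \<Rightarrow> real"
  assumes conv: "\<And>y::real. \<bar>y\<bar> < 1 \<Longrightarrow> summable (\<lambda>n. e n * y ^ n)"
    and tauber: "\<And>n. n \<ge> 1 \<Longrightarrow> - K \<le> cesaro_avg p (\<lambda>k. real k * e k) n"
    and lim: "((\<lambda>r. \<Sum>n. e n * r ^ n) \<longlongrightarrow> a) (at_left 1)"
  shows "cesaro_avg p (\<lambda>m. \<Sum>i\<le>m. e i) \<longlonglongrightarrow> a"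
proof -
  define \<sigma> where "\<sigma> = cesaro_avg p (\<lambda>m. \<Sum>i\<le>m. e i)"
  define d where "d n = \<sigma> n - (if n = 0 then 0 else \<sigma> (n - 1))" for n
  have d_sums: "(\<lambda>n. d n * r ^ n) sums ((1 - r) * (\<Sum>n. \<sigma> n * r ^ n))" if "\<bar>r\<bar> < 1" for r :: real
    unfolding d_def \<sigma>_def
    using summable_cesaro_avg_partial_sums[OF conv that] by (intro sums_backward_difference summable_sums)
  have "((\<lambda>r. \<Sum>n. d n * r ^ n) \<longlongrightarrow> a) (at_left 1)"
  proof (rule Lim_transform_eventually[OF abel_cesaro_avg[OF conv lim, of p]])
    show "\<forall>\<^sub>F r in at_left (1::real). (1 - r) * (\<Sum>n. cesaro_avg p (\<lambda>m. \<Sum>i\<le>m. e i) n * r ^ n) = (\<Sum>n. d n * r ^ n)"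
      using eventually_at_left_real[OF zero_less_one]
      by eventually_elim (use d_sums in \<open>auto simp: \<sigma>_def sums_iff\<close>)
  qed
  moreover have "- K \<le> real n * d n" if "n \<ge> 1" for n
    using tauber[OF that] cesaro_avg_partial_sums_diff[OF that, of p e] that by (simp add: d_def \<sigma>_def)
  ultimately have "(\<lambda>N. \<Sum>n\<le>N. d n) \<longlonglongrightarrow> a"
    using d_sums by (intro hardy_littlewood_tauberian) (auto simp: sums_iff)
  then show ?thesis unfolding d_def sum_backward_difference \<sigma>_def .
qed

theorem abel_iff_cesaro_lim:
  fixes e :: "nat \<Rightarrow> real"
  assumes conv: "\<And>y::real. \<bar>y\<bar> < 1 \<Longrightarrow> summable (\<lambda>n. e n * y ^ n)"
    and tauber: "\<And>n. n \<ge> 1 \<Longrightarrow> - K \<le> cesaro_avg p (\<lambda>k. real k * e k) n"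
  shows "((\<lambda>r. \<Sum>n. e n * r ^ n) \<longlongrightarrow> a) (at_left 1) \<longleftrightarrow> cesaro_lim (Suc p) (\<lambda>m. \<Sum>i\<le>m. e i) a"
  unfolding cesaro_lim_iff_cesaro_avg_tendsto
  using cesaro_avg_tendsto_if_abel[OF conv tauber] abel_tendsto_if_cesaro_avg_tendsto[OF conv] by blast

section \<open>Logarithmic singularities\<close>

lemma log_powser_sums:
  fixes r :: real
  assumes "\<bar>r\<bar> < 1"
  shows "(\<lambda>n. r ^ n / real n) sums ln (1 / (1 - r))"
proof -
  have "(\<lambda>n. - ((- (- r)) ^ n) / real n) sums ln (1 + - r)"
    using assms by (intro ln_series') simp
  moreover have "ln (1 / (1 - r)) = - ln (1 - r)"
    using assms by (subst ln_div) auto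
  ultimately show ?thesis using sums_minus by fastforce
qed

lemma abel_log_shift:
  fixes c :: "nat \<Rightarrow> real"
  assumes conv: "\<And>y::real. \<bar>y\<bar> < 1 \<Longrightarrow> summable (\<lambda>n. c n * y ^ n)"
  shows "((\<lambda>r. (\<Sum>n. c n * r ^ n) - a - b * ln (1 / (1 - r))) \<longlongrightarrow> 0) (at_left 1)
           \<longleftrightarrow> ((\<lambda>r. \<Sum>n. (c n - b / real n) * r ^ n) \<longlongrightarrow> a) (at_left 1)"
proof -
  have "\<forall>\<^sub>F r in at_left (1::real). (\<Sum>n. c n * r ^ n) - a - b * ln (1 / (1 - r))
                                    = (\<Sum>n. (c n - b / real n) * r ^ n) - a"
    using eventually_at_left_real[OF zero_less_one]
  proof eventually_elim
    case (elim r)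
    then have r: "\<bar>r\<bar> < 1" by auto
    have "(\<lambda>n. c n * r ^ n - b * (r ^ n / real n)) sums ((\<Sum>n. c n * r ^ n) - b * ln (1 / (1 - r)))"
      by (intro sums_diff summable_sums conv r sums_mult log_powser_sums)
    then show ?case by (simp add: sums_iff left_diff_distrib)
  qed
  then have "((\<lambda>r. (\<Sum>n. c n * r ^ n) - a - b * ln (1 / (1 - r))) \<longlongrightarrow> 0) (at_left 1)
               \<longleftrightarrow> ((\<lambda>r. (\<Sum>n. (c n - b / real n) * r ^ n) - a) \<longlongrightarrow> 0) (at_left 1)"
    by (rule tendsto_cong)
  then show ?thesis by (simp add: LIM_zero_iff)
qed

lemma sum_atMost_divide_of_nat: "(\<Sum>n\<le>N. b / real n) = b * harm N"
  by (induction N) (simp_all add: harm_expand(1) harm_Suc divide_inverse algebra_simps)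

text \<open>Since \<open>b / real 0 = 0\<close>, the term \<open>n = 0\<close> of \<open>c n - b / real n\<close> is \<open>c 0\<close>, matching the
  convention \<open>u 0 = c 0\<close> in the statement.\<close>
lemma cesaro_lim_log_shift:
  fixes c :: "nat \<Rightarrow> real"
  shows "cesaro_lim (Suc p) (\<lambda>N. if N = 0 then c 0 else (\<Sum>n\<le>N. c n) - b * ln (real N)) (a + b * euler_mascheroni)
           \<longleftrightarrow> cesaro_lim (Suc p) (\<lambda>N. \<Sum>n\<le>N. c n - b / real n) a"
proof -
  define v where "v N = (if N = 0 then 0 else b * (harm N - ln (real N)))" for N
  have "v \<longlonglongrightarrow> b * euler_mascheroni"
  proof (rule Lim_transform_eventually)
    show "(\<lambda>N. b * (harm N - ln (real N))) \<longlonglongrightarrow> b * euler_mascheroni"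
      by (intro tendsto_mult tendsto_const euler_mascheroni_LIMSEQ)
    show "\<forall>\<^sub>F N in sequentially. b * (harm N - ln (real N)) = v N"
      using eventually_ge_at_top[of 1] by eventually_elim (simp add: v_def)
  qed
  moreover have "(if N = 0 then c 0 else (\<Sum>n\<le>N. c n) - b * ln (real N)) = (\<Sum>n\<le>N. c n - b / real n) + v N" for N
    by (simp add: v_def sum_subtractf sum_atMost_divide_of_nat harm_expand(1) algebra_simps)
  ultimately show ?thesis by (simp add: cesaro_lim_add_convergent)
qed

lemma tauberian_condition_log_shift:
  fixes c :: "nat \<Rightarrow> real"
  assumes "\<exists>K>0. \<forall>n\<ge>1. cesaro_mean (Suc p) (\<lambda>k. real k * c k) n > - K"
  obtains K where "\<And>n. n \<ge> 1 \<Longrightarrow> - K \<le> cesaro_avg p (\<lambda>k. real k * (c k - b / real k)) n"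
proof -
  obtain K where K: "K > 0" "\<And>n. n \<ge> 1 \<Longrightarrow> cesaro_mean (Suc p) (\<lambda>k. real k * c k) n > - K"
    using assms by blast
  have "- (K + \<bar>b\<bar>) \<le> cesaro_avg p (\<lambda>k. real k * (c k - b / real k)) n" if n: "n \<ge> 1" for n
  proof -
    have "(\<lambda>k. real k * (c k - b / real k)) = (\<lambda>k. real k * c k - b * (if k = 0 then 0 else 1))"
      by (auto simp: fun_eq_iff right_diff_distrib)
    moreover have "\<bar>cesaro_avg p (\<lambda>k. b * (if k = 0 then 0 else 1)) n\<bar> \<le> \<bar>b\<bar>"
      by (rule abs_cesaro_avg_le) simp
    moreover have "- K \<le> cesaro_avg p (\<lambda>k. real k * c k) n"
      using cesaro_avg_lower_bound[OF n K(2)[OF n]] K(1) by simp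
    ultimately show ?thesis by (simp add: cesaro_avg_diff abs_le_iff)
  qed
  then show ?thesis by (rule that)
qed

theorem corollary4p9:
  fixes m :: nat and c :: "nat \<Rightarrow> real" and a b :: real
  assumes m: "m \<ge> 1"
    and conv: "\<And>r::real. \<bar>r\<bar> < 1 \<Longrightarrow> summable (\<lambda>n. c n * r ^ n)"
    and tauber: "\<exists>K>0. \<forall>n\<ge>1. cesaro_mean m (\<lambda>k. real k * c k) n > - K"
  shows "((\<lambda>r. (\<Sum>n. c n * r ^ n) - a - b * ln (1 / (1 - r))) \<longlongrightarrow> 0) (at_left (1::real))
     \<longleftrightarrow> cesaro_lim m (\<lambda>N. if N = 0 then c 0 else (\<Sum>n\<le>N. c n) - b * ln (real N))
            (a + b * euler_mascheroni)"
proof -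
  obtain p where p: "m = Suc p" using m by (cases m) auto
  have conv_e: "summable (\<lambda>n. (c n - b / real n) * r ^ n)" if "\<bar>r\<bar> < 1" for r :: real
    using sums_diff[OF summable_sums[OF conv[OF that]] sums_mult[OF log_powser_sums[OF that], of b]]
    by (simp add: sums_iff left_diff_distrib)
  obtain K where "\<And>n. n \<ge> 1 \<Longrightarrow> - K \<le> cesaro_avg p (\<lambda>k. real k * (c k - b / real k)) n"
    using tauberian_condition_log_shift[of p c b] tauber unfolding p by blast
  from abel_iff_cesaro_lim[OF conv_e this, of a] show ?thesis
    unfolding p using abel_log_shift[OF conv, of a b] cesaro_lim_log_shift[of p c b a] by simp
qed

end
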